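(* Fix $\omega\in\Omega_*$ and suppose $v^\varepsilon\in L^2(\mu^\varepsilon_\omega)$ converges weakly two-scale to $v\in L^2(\mathbb R^d\times\Omega,dx\times\mu)$. Then for every $j\ge1$, $e\in\mathcal B$, continuous $\psi:\Omega\to\mathbb R$ and continuous compactly supported $\varphi:\mathbb R^d\to\mathbb R$, $$\lim_{\varepsilon\downarrow0}\int_{\mathbb R^d}v^\varepsilon(x)\varphi(x)\psi(\tau_{x/\varepsilon}\omega)\Psi_{j,e}(\tau_{x/\varepsilon}\omega)\mu^\varepsilon_\omega(dx)=\int_{\mathbb R^d}dx\int_\Omega v(x,\omega')\varphi(x)\psi(\omega')\Psi_{j,e}(\omega')\mu(d\omega').$$
   Context: Setting: $d\ge2$, $c_0>0$, $\mathbb E_d$ non-oriented nearest-neighbour bonds of $\mathbb Z^d$, $\Omega=[0,c_0]^{\mathbb E_d}$ (product topology), $\omega(x,y)=\omega(\{x,y\})$, $\tau_x\omega(\{y,z\})=\omega(\{y+x,z+x\})$. $\mathbb Q$ Borel probability on $\Omega$, invariant and ergodic under $(\tau_x)$. $\Omega_0$: the $\omega$ for which the graph of bonds with $\omega(b)>0$ has a unique infinite cluster, vertex set $\mathcal C(\omega)$; $\mathbb Q(\Omega_0)=1$; $m=\mathbb Q(0\in\mathcal C(\omega))$. $\mathcal B=\{e\in\mathbb Z^d:|e|=1\}$. $\mu^\varepsilon_\omega=\varepsilon^d\sum_{x\in\mathcal C(\omega)}\delta_{\varepsilon x}$. $\mu(d\omega)=\mathbb 1_{\{0\in\mathcal C(\omega)\}}\mathbb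 Q(d\omega)$; $\int v\,dM=\sum_{e\in\mathcal B}\int\omega(0,e)v(\omega,e)\mu(d\omega)$; $\hat\omega(0,e)=\mathbb 1_{\{\omega(0,e)>0\}}$; $\nabla^{(\omega)}u(\omega,e)=\hat\omega(0,e)[u(\tau_e\omega)-u(\omega)]$; $\nabla^{(\omega)*}v(\omega)=\sum_e\omega(0,e)[v(\omega,e)-v(\tau_e\omega,-e)]$; $L^2_{\rm sol}(M)$ is the orthogonal complement of the closure of gradients of local functions. Regular environments: fix $(\psi_j)$ dense in $L^2_{\rm sol}(M)$ (fixed representatives), $\Psi_{j,e}(\omega)=\sqrt{\omega(0,e)}\psi_j(\omega,e)$, and continuous $f^{(k)}_{j,e}\to\Psi_{j,e}$ in $L^2(\mu)$. $\Omega_{*,j}$: $\omega\in\Omega_0$ with $\nabla^{(\omega)*}\psi_j(\tau_x\omega)=0$ for all $x\in\mathcal C(\omega)$ and $\lim_{\varepsilon\downarrow0}\int_{[-n,n]^d}(f^{(k)}_{j,e}-\Psi_{j,e})^2(\tau_{z/\varepsilon}\omega)\mu^\varepsilon_\omega(dz)=(2n)^d\|f^{(k)}_{j,e}-\Psi_{j,e}\|^2_{L^2(\mu)}$ for all $e,k,n$. $\Omega_1$: $\omega\in\Omega_0$ with $\mu^\varepsilon_\omega([-\ell,\ell]^d)\to m(2\ell)^d$ for all $\ell>0$ and $\int\varphi(z)u(\tau_{z/\varepsilon}\omega)\mu^\varepsilon_\omega(dz)\to\int\varphi\,dz\int u\,d\mu$ for all $\varphi\in C_c(\mathbb R^d)$,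 $u\in C(\Omega)$. $\Omega_*=\Omega_1\cap\bigcap_j\Omega_{*,j}$. Two-scale convergence: for $\omega\in\Omega_*$, $v^\varepsilon\in L^2(\mu^\varepsilon_\omega)$ converges weakly two-scale to $v\in L^2(\mathbb R^d\times\Omega,dx\times\mu)$ if $\limsup_{\varepsilon\downarrow0}\|v^\varepsilon\|_{L^2(\mu^\varepsilon_\omega)}<\infty$ and $\lim_{\varepsilon\downarrow0}\int v^\varepsilon(x)\varphi(x)\psi(\tau_{x/\varepsilon}\omega)\mu^\varepsilon_\omega(dx)=\int dx\int v(x,\omega')\varphi(x)\psi(\omega')\mu(d\omega')$ for all $\varphi\in C_c^\infty(\mathbb R^d)$, $\psi\in C(\Omega)$. *)

theory Defs
  imports "HOL-Analysis.Analysis"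
begin

text \<open>The dimension d is CARD('d) for a finite index type 'd; Z^d is int^'d, R^d is real^'d.
Environments are functions from (unordered) pairs of lattice sites, represented as
two-element sets, to the reals; they vanish off nearest-neighbour bonds.\<close>

type_synonym 'd env = "(int ^ 'd) set \<Rightarrow> real"

definition uvec :: "'d::finite \<Rightarrow> int ^ 'd" where
  "uvec i = (\<chi> j. if j = i then 1 else 0)"

definition Bset :: "(int ^ 'd::finite) set" where
  "Bset = {e. \<exists>i. e = uvec i \<or> e = - uvec i}"

definition bonds :: "(int ^ 'd::finite) set set" where
  "bonds = {{x, x + e} | x e. e \<in> Bset}"

text \<open>Omega = [0,c0]^{E_d}, embedded in the product space of all real functions on
pairs of sites (zero off bonds); it carries the (subspace of the) product topology.\<close>
definition Omega :: "real \<Rightarrow> ('d::finite) env set" where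
  "Omega c0 = {\<omega>. \<forall>b. (b \<in> bonds \<longrightarrow> 0 \<le> \<omega> b \<and> \<omega> b \<le> c0) \<and> (b \<notin> bonds \<longrightarrow> \<omega> b = 0)}"

definition wval :: "('d::finite) env \<Rightarrow> int ^ 'd \<Rightarrow> int ^ 'd \<Rightarrow> real" where
  "wval \<omega> x y = \<omega> {x, y}"

definition tau :: "int ^ 'd::finite \<Rightarrow> 'd env \<Rightarrow> 'd env" where
  "tau x \<omega> = (\<lambda>b. \<omega> ((\<lambda>y. y + x) ` b))"

definition adj :: "('d::finite) env \<Rightarrow> int ^ 'd \<Rightarrow> int ^ 'd \<Rightarrow> bool" where
  "adj \<omega> x y \<longleftrightarrow> {x, y} \<in> bonds \<and> \<omega> {x, y} > 0"

definition clusters :: "('d::finite) env \<Rightarrow> (int ^ 'd) set set" where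
  "clusters \<omega> = UNIV // {(x, y). (adj \<omega>)\<^sup>*\<^sup>* x y}"

definition Omega0 :: "real \<Rightarrow> ('d::finite) env set" where
  "Omega0 c0 = {\<omega> \<in> Omega c0. \<exists>!K. K \<in> clusters \<omega> \<and> infinite K}"

text \<open>C(omega): the unique infinite cluster (meaningful for omega in Omega0).\<close>
definition Cl :: "('d::finite) env \<Rightarrow> (int ^ 'd) set" where
  "Cl \<omega> = (THE K. K \<in> clusters \<omega> \<and> infinite K)"

definition D0 :: "real \<Rightarrow> ('d::finite) env set" where
  "D0 c0 = {\<omega> \<in> Omega0 c0. 0 \<in> Cl \<omega>}"

definition standing :: "real \<Rightarrow> ('d::finite) env measure \<Rightarrow> bool" where
  "standing c0 Q \<longleftrightarrow>
     CARD('d) \<ge> 2 \<and> c0 > 0 \<and>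
     sets Q = sets (restrict_space borel (Omega c0)) \<and>
     emeasure Q (space Q) = 1 \<and>
     (\<forall>x. tau x \<in> measurable Q Q \<and> distr Q Q (tau x) = Q) \<and>
     (\<forall>A \<in> sets Q. (\<forall>x. tau x -` A \<inter> space Q = A) \<longrightarrow> measure Q A = 0 \<or> measure Q A = 1) \<and>
     emeasure Q (Omega0 c0) = 1 \<and>
     D0 c0 \<in> sets Q"

definition mdens :: "real \<Rightarrow> ('d::finite) env measure \<Rightarrow> real" where
  "mdens c0 Q = measure Q (D0 c0)"

definition mu :: "real \<Rightarrow> ('d::finite) env measure \<Rightarrow> 'd env measure" where
  "mu c0 Q = density Q (indicator (D0 c0))"

definition MM :: "real \<Rightarrow> ('d::finite) env measure \<Rightarrow> ('d env \<times> (int ^ 'd)) measure" where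
  "MM c0 Q = density (mu c0 Q \<Otimes>\<^sub>M count_space Bset) (\<lambda>(\<omega>, e). ennreal (wval \<omega> 0 e))"

definition L2 :: "'a measure \<Rightarrow> ('a \<Rightarrow> real) \<Rightarrow> bool" where
  "L2 M g \<longleftrightarrow> g \<in> borel_measurable M \<and> integrable M (\<lambda>x. (g x)\<^sup>2)"

definition local_fun :: "real \<Rightarrow> ('d::finite) env measure \<Rightarrow> ('d env \<Rightarrow> real) \<Rightarrow> bool" where
  "local_fun c0 Q u \<longleftrightarrow> u \<in> borel_measurable Q \<and> bounded (u ` Omega c0) \<and>
     (\<exists>F. finite F \<and> F \<subseteq> bonds \<and>
        (\<forall>\<omega>\<in>Omega c0. \<forall>\<omega>'\<in>Omega c0. (\<forall>b\<in>F. \<omega> b = \<omega>' b) \<longrightarrow> u \<omega> = u \<omega>'))"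

definition grad :: "(('d::finite) env \<Rightarrow> real) \<Rightarrow> 'd env \<times> (int ^ 'd) \<Rightarrow> real" where
  "grad u p = (case p of (\<omega>, e) \<Rightarrow>
      (if wval \<omega> 0 e > 0 then 1 else 0) * (u (tau e \<omega>) - u \<omega>))"

definition divg :: "(('d::finite) env \<times> (int ^ 'd) \<Rightarrow> real) \<Rightarrow> 'd env \<Rightarrow> real" where
  "divg v \<omega> = (\<Sum>e\<in>Bset. wval \<omega> 0 e * (v (\<omega>, e) - v (tau e \<omega>, - e)))"

text \<open>L^2_sol(M): elements of L^2(M) orthogonal to all gradients of local functions
(equivalently, to the closure of their span).\<close>
definition L2sol :: "real \<Rightarrow> ('d::finite) env measure \<Rightarrow> ('d env \<times> (int ^ 'd) \<Rightarrow> real) set" where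
  "L2sol c0 Q = {v. L2 (MM c0 Q) v \<and>
     (\<forall>u. local_fun c0 Q u \<longrightarrow> (\<integral>p. v p * grad u p \<partial>MM c0 Q) = 0)}"

definition Psi :: "(nat \<Rightarrow> ('d::finite) env \<times> (int ^ 'd) \<Rightarrow> real) \<Rightarrow> nat \<Rightarrow> int ^ 'd \<Rightarrow> 'd env \<Rightarrow> real" where
  "Psi \<psi> j e \<omega> = sqrt (wval \<omega> 0 e) * \<psi> j (\<omega>, e)"

definition regular_data :: "real \<Rightarrow> ('d::finite) env measure \<Rightarrow> (nat \<Rightarrow> 'd env \<times> (int ^ 'd) \<Rightarrow> real)
     \<Rightarrow> (nat \<Rightarrow> int ^ 'd \<Rightarrow> nat \<Rightarrow> 'd env \<Rightarrow> real) \<Rightarrow> bool" where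
  "regular_data c0 Q \<psi> f \<longleftrightarrow>
     (\<forall>j. \<psi> j \<in> L2sol c0 Q) \<and>
     (\<forall>v \<in> L2sol c0 Q. \<forall>\<delta>>0. \<exists>j. (\<integral>p. (v p - \<psi> j p)\<^sup>2 \<partial>MM c0 Q) < \<delta>) \<and>
     (\<forall>j. \<forall>e\<in>Bset. \<forall>k. continuous_on (Omega c0) (f j e k)) \<and>
     (\<forall>j. \<forall>e\<in>Bset.
        (\<forall>k. integrable (mu c0 Q) (\<lambda>\<omega>. (f j e k \<omega> - Psi \<psi> j e \<omega>)\<^sup>2)) \<and>
        (\<lambda>k. \<integral>\<omega>. (f j e k \<omega> - Psi \<psi> j e \<omega>)\<^sup>2 \<partial>mu c0 Q) \<longlonglongrightarrow> 0)"

definition lat :: "int ^ 'd::finite \<Rightarrow> real ^ 'd" where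
  "lat x = (\<chi> i. real_of_int (x $ i))"

text \<open>Lattice point of a real vector; only used at points z/eps with z in the support
eps*C(omega) of mu^eps_omega, where it recovers z/eps exactly.\<close>
definition tolat :: "real ^ 'd::finite \<Rightarrow> int ^ 'd" where
  "tolat y = (\<chi> i. \<lfloor>y $ i\<rfloor>)"

definition tau_r :: "real ^ 'd::finite \<Rightarrow> 'd env \<Rightarrow> 'd env" where
  "tau_r y \<omega> = tau (tolat y) \<omega>"

definition mu_eps :: "('d::finite) env \<Rightarrow> real \<Rightarrow> (real ^ 'd) measure" where
  "mu_eps \<omega> \<epsilon> = density (count_space UNIV)
     (\<lambda>z. ennreal (\<epsilon> ^ CARD('d)) * indicator ((\<lambda>x. \<epsilon> *\<^sub>R lat x) ` Cl \<omega>) z)"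

definition cube :: "real \<Rightarrow> (real ^ 'd::finite) set" where
  "cube l = {z. \<forall>i. - l \<le> z $ i \<and> z $ i \<le> l}"

definition Cc :: "('a::topological_space \<Rightarrow> real) \<Rightarrow> bool" where
  "Cc \<phi> \<longleftrightarrow> continuous_on UNIV \<phi> \<and> compact (closure {x. \<phi> x \<noteq> 0})"

fun Ck :: "nat \<Rightarrow> ('a::real_normed_vector \<Rightarrow> real) \<Rightarrow> bool" where
  "Ck 0 f = continuous_on UNIV f"
| "Ck (Suc k) f = (\<exists>Df. (\<forall>x. (f has_derivative Df x) (at x)) \<and> (\<forall>v. Ck k (\<lambda>x. Df x v)))"

definition Cc_inf :: "('a::real_normed_vector \<Rightarrow> real) \<Rightarrow> bool" where
  "Cc_inf \<phi> \<longleftrightarrow> (\<forall>k. Ck k \<phi>) \<and> compact (closure {x. \<phi> x \<noteq> 0})"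

definition Omega1 :: "real \<Rightarrow> ('d::finite) env measure \<Rightarrow> 'd env set" where
  "Omega1 c0 Q = {\<omega> \<in> Omega0 c0.
     (\<forall>l>0. ((\<lambda>\<epsilon>. measure (mu_eps \<omega> \<epsilon>) (cube l)) \<longlongrightarrow> mdens c0 Q * (2 * l) ^ CARD('d)) (at_right 0)) \<and>
     (\<forall>\<phi> u. Cc (\<phi> :: real ^ 'd \<Rightarrow> real) \<longrightarrow> continuous_on (Omega c0) u \<longrightarrow>
        ((\<lambda>\<epsilon>. \<integral>z. \<phi> z * u (tau_r ((1 / \<epsilon>) *\<^sub>R z) \<omega>) \<partial>mu_eps \<omega> \<epsilon>)
          \<longlongrightarrow> (\<integral>z. \<phi> z \<partial>lborel) * (\<integral>\<omega>'. u \<omega>' \<partial>mu c0 Q)) (at_right 0))}"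

definition Omega_star_j :: "real \<Rightarrow> ('d::finite) env measure \<Rightarrow> (nat \<Rightarrow> 'd env \<times> (int ^ 'd) \<Rightarrow> real)
     \<Rightarrow> (nat \<Rightarrow> int ^ 'd \<Rightarrow> nat \<Rightarrow> 'd env \<Rightarrow> real) \<Rightarrow> nat \<Rightarrow> 'd env set" where
  "Omega_star_j c0 Q \<psi> f j = {\<omega> \<in> Omega0 c0.
     (\<forall>x \<in> Cl \<omega>. divg (\<psi> j) (tau x \<omega>) = 0) \<and>
     (\<forall>e \<in> Bset. \<forall>k. \<forall>n::nat.
        ((\<lambda>\<epsilon>. \<integral>z. indicator (cube (real n)) z *
               (f j e k (tau_r ((1 / \<epsilon>) *\<^sub>R z) \<omega>) - Psi \<psi> j e (tau_r ((1 / \<epsilon>) *\<^sub>R z) \<omega>))\<^sup>2 \<partial>mu_eps \<omega> \<epsilon>)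
         \<longlongrightarrow> (2 * real n) ^ CARD('d) * (\<integral>\<omega>'. (f j e k \<omega>' - Psi \<psi> j e \<omega>')\<^sup>2 \<partial>mu c0 Q)) (at_right 0))}"

definition Omega_star :: "real \<Rightarrow> ('d::finite) env measure \<Rightarrow> (nat \<Rightarrow> 'd env \<times> (int ^ 'd) \<Rightarrow> real)
     \<Rightarrow> (nat \<Rightarrow> int ^ 'd \<Rightarrow> nat \<Rightarrow> 'd env \<Rightarrow> real) \<Rightarrow> 'd env set" where
  "Omega_star c0 Q \<psi> f = Omega1 c0 Q \<inter> (\<Inter>j. Omega_star_j c0 Q \<psi> f j)"

definition two_scale_weak :: "real \<Rightarrow> ('d::finite) env measure \<Rightarrow> 'd env
     \<Rightarrow> (real \<Rightarrow> real ^ 'd \<Rightarrow> real) \<Rightarrow> ((real ^ 'd) \<times> 'd env \<Rightarrow> real) \<Rightarrow> bool" where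
  "two_scale_weak c0 Q \<omega> v\<epsilon> v \<longleftrightarrow>
     (\<forall>\<epsilon>>0. L2 (mu_eps \<omega> \<epsilon>) (v\<epsilon> \<epsilon>)) \<and>
     L2 (lborel \<Otimes>\<^sub>M mu c0 Q) v \<and>
     Limsup (at_right 0) (\<lambda>\<epsilon>. ereal (sqrt (\<integral>x. (v\<epsilon> \<epsilon> x)\<^sup>2 \<partial>mu_eps \<omega> \<epsilon>))) < \<infinity> \<and>
     (\<forall>\<phi> g. Cc_inf (\<phi> :: real ^ 'd \<Rightarrow> real) \<longrightarrow> continuous_on (Omega c0) g \<longrightarrow>
        ((\<lambda>\<epsilon>. \<integral>x. v\<epsilon> \<epsilon> x * \<phi> x * g (tau_r ((1 / \<epsilon>) *\<^sub>R x) \<omega>) \<partial>mu_eps \<omega> \<epsilon>)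
          \<longlongrightarrow> (\<integral>x. (\<integral>\<omega>'. v (x, \<omega>') * \<phi> x * g \<omega>' \<partial>mu c0 Q) \<partial>lborel)) (at_right 0))"

end

theory Submission
  imports Defs "HOL-Computational_Algebra.Polynomial"
begin

text \<open>
  Weak two-scale convergence tests \<open>v\<epsilon>\<close> only against \<open>\<phi>(x) \<psi>(\<tau>\<^bsub>x/\<epsilon>\<^esub> \<omega>)\<close> with \<open>\<phi>\<close>
  smooth and \<open>\<psi>\<close> continuous, whereas here \<open>\<phi>\<close> is merely continuous and the weight \<open>\<Psi>\<close> is only
  square integrable. Both gaps are closed by approximation: first \<open>\<phi>\<close> is approximated uniformly by
  smooth compactly supported functions (a polynomial times a flat bump), then \<open>\<Psi>\<close> is approximated
  in \<open>L\<^sup>2(\<mu>)\<close> by the continuous \<open>f j e k\<close>. In both steps the error is controlled by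
  Cauchy--Schwarz, uniformly in \<open>\<epsilon>\<close>: at scale \<open>\<epsilon>\<close> through the bound on the norms of \<open>v\<epsilon>\<close>,
  the convergence of the rescaled lattice measures on cubes and, for \<open>\<Psi>\<close>, the ergodic averages
  defining \<open>Omega_star_j\<close>; in the limit through the square integrability of \<open>v\<close> on
  \<open>\<real>\<^sup>d \<times> \<Omega>\<close>.
\<close>

section \<open>Smooth compactly supported approximation\<close>

lemma Ck_SucD: "Ck (Suc k) f \<Longrightarrow> Ck k f"
proof (induction k arbitrary: f)
  case 0
  then obtain Df where "\<forall>x. (f has_derivative Df x) (at x)" by auto
  then show ?case by (auto intro!: continuous_at_imp_continuous_on has_derivative_continuous)
next
  case (Suc k)
  then obtain Df where "\<forall>x. (f has_derivative Df x) (at x)" "\<forall>v. Ck (Suc k) (\<lambda>x. Df x v)" by auto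
  then show ?case using Suc.IH by auto
qed

lemma Ck_const: "Ck k (\<lambda>x. c)"
proof (induction k arbitrary: c)
  case (Suc k)
  show ?case unfolding Ck.simps(2) by (rule exI[of _ "\<lambda>x v. 0"]) (auto simp: Suc.IH)
qed simp

lemma Ck_add: "Ck k f \<Longrightarrow> Ck k g \<Longrightarrow> Ck k (\<lambda>x. f x + g x)"
proof (induction k arbitrary: f g)
  case 0 then show ?case by (auto intro: continuous_on_add)
next
  case (Suc k)
  from Suc.prems obtain Df Dg where f: "\<forall>x. (f has_derivative Df x) (at x)" "\<forall>v. Ck k (\<lambda>x. Df x v)"
    and g: "\<forall>x. (g has_derivative Dg x) (at x)" "\<forall>v. Ck k (\<lambda>x. Dg x v)" by auto
  show ?case unfolding Ck.simps(2)
    by (rule exI[of _ "\<lambda>x v. Df x v + Dg x v"]) (use f g Suc.IH in \<open>auto intro: has_derivative_add\<close>)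
qed

lemma Ck_mult: "Ck k f \<Longrightarrow> Ck k g \<Longrightarrow> Ck k (\<lambda>x. f x * g x)"
proof (induction k arbitrary: f g)
  case 0 then show ?case by (auto intro: continuous_on_mult)
next
  case (Suc k)
  from Suc.prems obtain Df Dg where f: "\<forall>x. (f has_derivative Df x) (at x)" "\<forall>v. Ck k (\<lambda>x. Df x v)"
    and g: "\<forall>x. (g has_derivative Dg x) (at x)" "\<forall>v. Ck k (\<lambda>x. Dg x v)" by auto
  have "Ck k f" "Ck k g" using Suc.prems Ck_SucD by blast+
  then show ?case unfolding Ck.simps(2)
    by (intro exI[of _ "\<lambda>x v. f x * Dg x v + Df x v * g x"])
      (use f g Suc.IH in \<open>auto intro!: has_derivative_mult Ck_add\<close>)
qed

lemma Ck_diff: "Ck k f \<Longrightarrow> Ck k g \<Longrightarrow> Ck k (\<lambda>x. f x - g x)"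
  using Ck_add[of k f "\<lambda>x. (-1) * g x"] Ck_mult[OF Ck_const[of k "-1"], of g] by simp

lemma Ck_bounded_linear:
  assumes L: "bounded_linear L"
  shows "Ck k L"
proof (cases k)
  case 0 then show ?thesis using L by (auto intro: linear_continuous_on)
next
  case (Suc k')
  show ?thesis unfolding Suc Ck.simps(2)
    by (rule exI[of _ "\<lambda>x v. L v"]) (auto simp: Ck_const L bounded_linear_imp_has_derivative)
qed

lemma Ck_polynomial_function: "polynomial_function (p :: 'a::real_normed_vector \<Rightarrow> real) \<Longrightarrow> Ck k p"
  unfolding real_polynomial_function_eq[symmetric]
  by (induction p rule: real_polynomial_function.induct)
    (auto intro: Ck_bounded_linear Ck_const Ck_add Ck_mult)

lemma Ck_inner_self: "Ck k (\<lambda>x::'a::real_inner. x \<bullet> x)"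
proof (cases k)
  case (Suc k')
  have "((\<lambda>x::'a. x \<bullet> x) has_derivative (\<lambda>v. 2 * (x \<bullet> v))) (at x)" for x
    by (auto intro!: derivative_eq_intros simp: inner_commute)
  moreover have "Ck k' (\<lambda>x::'a. 2 * (x \<bullet> v))" for v
    by (rule Ck_bounded_linear) (auto intro: bounded_linear_intros)
  ultimately show ?thesis unfolding Suc Ck.simps(2)
    by (intro exI[of _ "\<lambda>x v. 2 * (x \<bullet> v)"]) auto
qed (simp add: continuous_intros)

lemma Ck_compose_derivatives:
  fixes H :: "nat \<Rightarrow> real \<Rightarrow> real"
  assumes H: "\<And>n t. (H n has_real_derivative H (Suc n) t) (at t)"
  shows "Ck k p \<Longrightarrow> Ck k (\<lambda>x. H n (p x))"
proof (induction k arbitrary: p n)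
  case 0
  have "continuous_on UNIV (H n)"
    using H by (auto intro!: continuous_at_imp_continuous_on DERIV_isCont)
  then show ?case using 0 by (auto intro: continuous_on_compose2)
next
  case (Suc k)
  from Suc.prems obtain Dp where p: "\<forall>x. (p has_derivative Dp x) (at x)" "\<forall>v. Ck k (\<lambda>x. Dp x v)"
    by auto
  have "Ck k p" using Suc.prems by (rule Ck_SucD)
  moreover have "((\<lambda>x. H n (p x)) has_derivative (\<lambda>v. H (Suc n) (p x) * Dp x v)) (at x)" for x
    using has_derivative_compose[OF p(1)[rule_format, of x] H[of n "p x", unfolded has_field_derivative_def]]
    by (simp add: o_def mult.commute)
  ultimately show ?case unfolding Ck.simps(2)
    by (intro exI[of _ "\<lambda>x v. H (Suc n) (p x) * Dp x v"]) (use p Suc.IH in \<open>auto intro!: Ck_mult\<close>)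
qed

lemma tendsto_poly_times_exp_neg: "((\<lambda>s. poly p s * exp (- s)) \<longlongrightarrow> (0::real)) at_top"
proof -
  have "((\<lambda>s. \<Sum>i\<le>degree p. coeff p i * (s ^ i / exp s)) \<longlongrightarrow> (\<Sum>i\<le>degree p. coeff p i * 0)) at_top"
    by (intro tendsto_intros tendsto_power_div_exp_0)
  moreover have "poly p s * exp (- s) = (\<Sum>i\<le>degree p. coeff p i * (s ^ i / exp s))" for s
    by (simp add: poly_altdef exp_minus divide_inverse sum_distrib_right mult.assoc)
  ultimately show ?thesis by simp
qed

text \<open>\<open>exp_inv_deriv n\<close> is the \<open>n\<close>-th derivative of the function equal to \<open>exp (-1/t)\<close> for
\<open>t > 0\<close> and to \<open>0\<close> for \<open>t \<le> 0\<close>, which is smooth and flat at \<open>0\<close>; the recursion for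
\<open>exp_inv_poly\<close> is the chain rule.\<close>

fun exp_inv_poly :: "nat \<Rightarrow> real poly" where
  "exp_inv_poly 0 = 1"
| "exp_inv_poly (Suc n) = [:0,0,1:] * (exp_inv_poly n - pderiv (exp_inv_poly n))"

definition exp_inv_deriv :: "nat \<Rightarrow> real \<Rightarrow> real" where
  "exp_inv_deriv n t = (if t > 0 then poly (exp_inv_poly n) (1/t) * exp (- (1/t)) else 0)"

lemma exp_inv_deriv_has_derivative_pos:
  assumes t: "t > 0"
  shows "(exp_inv_deriv n has_real_derivative exp_inv_deriv (Suc n) t) (at t)"
proof -
  have d: "((\<lambda>t. poly (exp_inv_poly n) (1/t) * exp (- (1/t))) has_real_derivative
      poly (pderiv (exp_inv_poly n)) (1/t) * (- 1 / t^2) * exp (- (1/t))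
        + poly (exp_inv_poly n) (1/t) * (exp (- (1/t)) * (1 / t^2))) (at t)"
    using t by (auto intro!: derivative_eq_intros DERIV_chain2[OF poly_DERIV]
        simp: power2_eq_square field_simps)
  have eq: "poly (pderiv (exp_inv_poly n)) (1/t) * (- 1 / t^2) * exp (- (1/t))
        + poly (exp_inv_poly n) (1/t) * (exp (- (1/t)) * (1 / t^2)) = exp_inv_deriv (Suc n) t"
    using t by (simp add: exp_inv_deriv_def power2_eq_square field_simps)
  show ?thesis
    using d[unfolded eq]
    by (rule has_field_derivative_transform_within_open[of _ _ _ "{0<..}"])
      (use t in \<open>auto simp: exp_inv_deriv_def\<close>)
qed

lemma exp_inv_deriv_has_derivative_neg:
  assumes t: "t < 0"
  shows "(exp_inv_deriv n has_real_derivative exp_inv_deriv (Suc n) t) (at t)"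
proof -
  have "((\<lambda>_. 0::real) has_real_derivative 0) (at t)" by simp
  then have "(exp_inv_deriv n has_real_derivative 0) (at t)"
    by (rule has_field_derivative_transform_within_open[of _ _ _ "{..<0}"])
      (use t in \<open>auto simp: exp_inv_deriv_def\<close>)
  then show ?thesis using t by (simp add: exp_inv_deriv_def)
qed

lemma exp_inv_deriv_has_derivative_0:
  "(exp_inv_deriv n has_real_derivative exp_inv_deriv (Suc n) 0) (at 0)"
  unfolding DERIV_def
proof (rule filterlim_split_at)
  have "\<forall>\<^sub>F h in at_left (0::real). h < 0"
    by (simp add: eventually_at_filter)
  then have "\<forall>\<^sub>F h in at_left (0::real). 0 = (exp_inv_deriv n (0 + h) - exp_inv_deriv n 0) / h"
    by eventually_elim (auto simp: exp_inv_deriv_def)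
  then show "((\<lambda>h. (exp_inv_deriv n (0 + h) - exp_inv_deriv n 0) / h) \<longlongrightarrow> exp_inv_deriv (Suc n) 0)
      (at_left 0)"
    by (auto simp: exp_inv_deriv_def
        intro: tendsto_eventually[THEN tendsto_cong[THEN iffD1, rotated]] Lim_transform_eventually)
next
  txt \<open>The right difference quotient is \<open>p s * exp (- s)\<close> at \<open>s = 1/h\<close>, with \<open>p = s \<cdot> exp_inv_poly n\<close>.\<close>
  have "((\<lambda>h. poly (exp_inv_poly n * [:0,1:]) (inverse h) * exp (- inverse h)) \<longlongrightarrow> (0::real))
      (at_right 0)"
    by (rule filterlim_compose[OF tendsto_poly_times_exp_neg filterlim_inverse_at_top_right])
  moreover have "\<forall>\<^sub>F h in at_right (0::real). h > 0"
    by (simp add: eventually_at_filter)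
  then have "\<forall>\<^sub>F h in at_right (0::real). poly (exp_inv_poly n * [:0,1:]) (inverse h) * exp (- inverse h)
      = (exp_inv_deriv n (0 + h) - exp_inv_deriv n 0) / h"
    by eventually_elim (auto simp: exp_inv_deriv_def divide_inverse)
  ultimately show "((\<lambda>h. (exp_inv_deriv n (0 + h) - exp_inv_deriv n 0) / h) \<longlongrightarrow> exp_inv_deriv (Suc n) 0)
      (at_right 0)"
    by (auto simp: exp_inv_deriv_def intro: Lim_transform_eventually)
qed

lemma exp_inv_deriv_has_derivative:
  "(exp_inv_deriv n has_real_derivative exp_inv_deriv (Suc n) t) (at t)"
  using exp_inv_deriv_has_derivative_pos exp_inv_deriv_has_derivative_neg
    exp_inv_deriv_has_derivative_0
  by (cases t "0::real" rule: linorder_cases) auto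

definition flat_bump :: "real \<Rightarrow> 'a::real_inner \<Rightarrow> real" where
  "flat_bump \<rho> x = exp_inv_deriv 0 (\<rho>^2 - x \<bullet> x)"

lemma Ck_flat_bump: "Ck k (flat_bump \<rho>)"
  unfolding flat_bump_def[abs_def]
  by (rule Ck_compose_derivatives[of exp_inv_deriv, OF exp_inv_deriv_has_derivative])
    (intro Ck_diff Ck_const Ck_inner_self)

lemma flat_bump_pos_iff:
  assumes "0 \<le> \<rho>"
  shows "0 < flat_bump \<rho> x \<longleftrightarrow> norm x < \<rho>"
proof -
  have "(norm x)^2 < \<rho>^2 \<longleftrightarrow> norm x < \<rho>"
    using assms by (smt (verit) norm_ge_zero power_mono power_strict_mono zero_less_numeral pos2)
  then show ?thesis by (auto simp: flat_bump_def exp_inv_deriv_def power2_norm_eq_inner)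
qed

lemma flat_bump_bounds: "0 \<le> flat_bump \<rho> x" "flat_bump \<rho> x \<le> 1"
  by (auto simp: flat_bump_def exp_inv_deriv_def)

lemma Cc_inf_uniform_approx:
  fixes \<phi> :: "'a::euclidean_space \<Rightarrow> real"
  assumes cont: "continuous_on UNIV \<phi>" and R: "0 \<le> R" and vanish: "\<And>x. R \<le> norm x \<Longrightarrow> \<phi> x = 0"
    and \<delta>: "0 < \<delta>"
  obtains \<phi>' where "Cc_inf \<phi>'" "\<And>x. \<bar>\<phi> x - \<phi>' x\<bar> \<le> \<delta>" "\<And>x. R + 1 \<le> norm x \<Longrightarrow> \<phi>' x = 0"
proof -
  txt \<open>With \<open>\<beta> = flat_bump (R + 1)\<close>, the quotient \<open>\<phi> / \<beta>\<close> is continuous; approximating it on the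
    closed ball by a polynomial \<open>p\<close> (Stone--Weierstrass) and multiplying back by \<open>\<beta> \<le> 1\<close> gives
    \<open>\<phi>'\<close>.\<close>
  define \<beta> :: "'a \<Rightarrow> real" where "\<beta> = flat_bump (R + 1)"
  have \<beta>_pos_iff: "\<beta> x > 0 \<longleftrightarrow> norm x < R + 1" for x
    using R by (simp add: \<beta>_def flat_bump_pos_iff)
  have \<beta>_bounds: "0 \<le> \<beta> x" "\<beta> x \<le> 1" for x by (simp_all add: \<beta>_def flat_bump_bounds)
  have \<beta>_0: "\<beta> x = 0" if "R + 1 \<le> norm x" for x using \<beta>_pos_iff[of x] \<beta>_bounds[of x] that by auto
  have Ck_\<beta>: "Ck k \<beta>" for k by (simp add: \<beta>_def Ck_flat_bump)
  define q where "q x = \<phi> x / \<beta> x" for x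
  have "continuous_on {x. norm x < R + 1} q"
    unfolding q_def using cont Ck_\<beta>[of 0]
    by (intro continuous_at_imp_continuous_on ballI isCont_divide)
      (auto simp: continuous_on_eq_continuous_at dest!: \<beta>_pos_iff[THEN iffD2])
  moreover have "continuous_on {x. norm x > R} q"
    by (rule continuous_on_cong[THEN iffD1, OF refl _ continuous_on_const[of _ 0]])
      (auto simp: q_def vanish)
  ultimately have "continuous_on ({x. norm x < R + 1} \<union> {x. norm x > R}) q"
    by (intro continuous_on_open_Un) (auto intro: open_Collect_less continuous_intros)
  moreover have "{x. norm x < R + 1} \<union> {x::'a. norm x > R} = UNIV" by auto
  ultimately have "continuous_on (cball 0 (R+1)) q" by (metis continuous_on_subset subset_UNIV)
  then obtain p where p: "polynomial_function p" "\<forall>x\<in>cball 0 (R+1). norm (q x - p x) < \<delta>"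
    using Stone_Weierstrass_polynomial_function[OF compact_cball _ \<delta>] by blast
  define \<phi>' where "\<phi>' x = \<beta> x * p x" for x
  have \<phi>'_0: "\<phi>' x = 0" if "R + 1 \<le> norm x" for x using \<beta>_0[OF that] by (simp add: \<phi>'_def)
  have "Ck k \<phi>'" for k unfolding \<phi>'_def by (intro Ck_mult Ck_\<beta> Ck_polynomial_function p)
  moreover have "compact (closure {x. \<phi>' x \<noteq> 0})"
  proof -
    have "{x. \<phi>' x \<noteq> 0} \<subseteq> cball 0 (R+1)" using \<phi>'_0 by (force simp: not_le)
    then show ?thesis using bounded_subset[OF bounded_cball] by simp
  qed
  moreover have "\<bar>\<phi> x - \<phi>' x\<bar> \<le> \<delta>" for x
  proof (cases "norm x < R + 1")
    case True
    then have "\<phi> x = \<beta> x * q x" using \<beta>_pos_iff[of x] by (simp add: q_def)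
    then have "\<bar>\<phi> x - \<phi>' x\<bar> = \<beta> x * \<bar>q x - p x\<bar>"
      using \<beta>_bounds[of x] by (simp add: \<phi>'_def abs_mult right_diff_distrib[symmetric])
    also have "\<dots> \<le> 1 * \<delta>"
      using p(2) True \<beta>_bounds[of x] by (intro mult_mono) (auto simp: less_imp_le)
    finally show ?thesis by simp
  next
    case False
    then show ?thesis using \<phi>'_0[of x] vanish[of x] R \<delta> by auto
  qed
  ultimately show ?thesis using that \<phi>'_0 by (auto simp: Cc_inf_def)
qed

lemma Cc_vanishes_outside_ball:
  fixes \<phi> :: "'a::real_normed_vector \<Rightarrow> real"
  assumes "Cc \<phi>"
  obtains R where "0 \<le> R" "\<And>x. R \<le> norm x \<Longrightarrow> \<phi> x = 0"
proof -
  have "bounded (closure {x. \<phi> x \<noteq> 0})" using assms by (simp add: Cc_def compact_imp_bounded)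
  then obtain B where B: "\<forall>x\<in>closure {x. \<phi> x \<noteq> 0}. norm x \<le> B" unfolding bounded_iff by blast
  have "\<phi> x = 0" if "max B 0 + 1 \<le> norm x" for x
    using that B closure_subset[of "{x. \<phi> x \<noteq> 0}"] by force
  then show ?thesis using that[of "max B 0 + 1"] by simp
qed

lemma Cc_bounded:
  fixes \<phi> :: "'a::topological_space \<Rightarrow> real"
  assumes "Cc \<phi>"
  obtains \<Phi> where "0 \<le> \<Phi>" "\<And>x. \<bar>\<phi> x\<bar> \<le> \<Phi>"
proof -
  let ?S = "closure {x. \<phi> x \<noteq> 0}"
  have "compact (\<phi> ` ?S)"
    using assms by (auto simp: Cc_def intro: compact_continuous_image continuous_on_subset)
  then obtain B where B: "\<forall>y\<in>\<phi> ` ?S. norm y \<le> B" using compact_imp_bounded bounded_iff by metis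
  have "\<bar>\<phi> x\<bar> \<le> max B 0" for x
    using B closure_subset[of "{x. \<phi> x \<noteq> 0}"] by (cases "\<phi> x = 0") force+
  then show ?thesis using that[of "max B 0"] by simp
qed

section \<open>Cauchy--Schwarz estimates\<close>

lemma discriminant_le_of_quadratic_nonneg:
  fixes A B C :: real
  assumes nonneg: "\<And>t. 0 \<le> t^2 * A - 2 * t * C + B" and A: "0 \<le> A"
  shows "C^2 \<le> A * B"
proof (cases "A = 0")
  case True
  have "C = 0"
  proof (rule ccontr)
    assume "C \<noteq> 0"
    then have "0 \<le> B - 2 * ((B + 1) / (2 * C)) * C" using nonneg[of "(B+1)/(2*C)"] True by simp
    also have "\<dots> = -1" using \<open>C \<noteq> 0\<close> by (simp add: field_simps)
    finally show False by simp
  qed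
  then show ?thesis using True by simp
next
  case False
  then have "A > 0" using A by simp
  have "0 \<le> (C/A)^2 * A - 2 * (C/A) * C + B" by (rule nonneg)
  also have "\<dots> = B - C^2 / A" using \<open>A > 0\<close> by (simp add: field_simps power2_eq_square)
  finally show ?thesis using \<open>A > 0\<close> by (simp add: divide_le_eq mult.commute)
qed

lemma abs_integral_mult_le:
  fixes a b :: "'a \<Rightarrow> real"
  assumes a: "integrable M (\<lambda>x. (a x)^2)" and b: "integrable M (\<lambda>x. (b x)^2)"
    and ab: "integrable M (\<lambda>x. a x * b x)"
  shows "\<bar>\<integral>x. a x * b x \<partial>M\<bar> \<le> sqrt (\<integral>x. (a x)^2 \<partial>M) * sqrt (\<integral>x. (b x)^2 \<partial>M)"
proof -
  have "(\<integral>x. a x * b x \<partial>M)^2 \<le> (\<integral>x. (a x)^2 \<partial>M) * (\<integral>x. (b x)^2 \<partial>M)"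
  proof (rule discriminant_le_of_quadratic_nonneg)
    fix t :: real
    have "0 \<le> (\<integral>x. (t * a x - b x)^2 \<partial>M)" by simp
    also have "(\<integral>x. (t * a x - b x)^2 \<partial>M) = (\<integral>x. t^2 * (a x)^2 - 2 * t * (a x * b x) + (b x)^2 \<partial>M)"
      by (rule Bochner_Integration.integral_cong) (auto simp: power2_eq_square algebra_simps)
    also have "\<dots> = t^2 * (\<integral>x. (a x)^2 \<partial>M) - 2 * t * (\<integral>x. a x * b x \<partial>M) + (\<integral>x. (b x)^2 \<partial>M)"
      using a b ab by simp
    finally show "0 \<le> t^2 * (\<integral>x. (a x)^2 \<partial>M) - 2 * t * (\<integral>x. a x * b x \<partial>M) + (\<integral>x. (b x)^2 \<partial>M)" .
  qed simp
  then have "sqrt ((\<integral>x. a x * b x \<partial>M)^2) \<le> sqrt ((\<integral>x. (a x)^2 \<partial>M) * (\<integral>x. (b x)^2 \<partial>M))"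
    by (rule real_sqrt_le_mono)
  then show ?thesis by (simp add: real_sqrt_mult)
qed

lemma integrable_mult_of_square_integrable:
  fixes a b :: "'a \<Rightarrow> real"
  assumes "a \<in> borel_measurable M" "b \<in> borel_measurable M"
    and "integrable M (\<lambda>x. (a x)^2)" "integrable M (\<lambda>x. (b x)^2)"
  shows "integrable M (\<lambda>x. a x * b x)"
proof (rule Bochner_Integration.integrable_bound[of _ "\<lambda>x. (a x)^2 + (b x)^2"])
  show "integrable M (\<lambda>x. (a x)^2 + (b x)^2)" using assms by simp
  show "(\<lambda>x. a x * b x) \<in> borel_measurable M" using assms by measurable
  have "2 * \<bar>a x * b x\<bar> \<le> (a x)^2 + (b x)^2" for x
    using zero_le_power2[of "\<bar>a x\<bar> - \<bar>b x\<bar>"] by (simp add: power2_diff abs_mult)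
  then have "\<bar>a x * b x\<bar> \<le> (a x)^2 + (b x)^2" for x
    using abs_ge_zero[of "a x * b x"] by (smt (verit))
  then show "AE x in M. norm (a x * b x) \<le> norm ((a x)^2 + (b x)^2)"
    by (intro AE_I2) simp
qed

lemma integrable_square_diff:
  fixes a b :: "'a \<Rightarrow> real"
  assumes "a \<in> borel_measurable M" "b \<in> borel_measurable M"
    and "integrable M (\<lambda>x. (a x)^2)" "integrable M (\<lambda>x. (b x)^2)"
  shows "integrable M (\<lambda>x. (a x - b x)^2)"
proof -
  have "integrable M (\<lambda>x. (a x)^2 + (b x)^2 - 2 * (a x * b x))"
    using assms integrable_mult_of_square_integrable[OF assms] by auto
  then show ?thesis by (simp add: power2_diff mult.assoc)
qed

lemma pair_integral_diff_le:
  fixes v w1 w2 :: "'a \<times> 'b \<Rightarrow> real"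
  assumes "sigma_finite_measure M1" "sigma_finite_measure M2"
    and v: "v \<in> borel_measurable (M1 \<Otimes>\<^sub>M M2)" "integrable (M1 \<Otimes>\<^sub>M M2) (\<lambda>p. (v p)^2)"
    and w1: "w1 \<in> borel_measurable (M1 \<Otimes>\<^sub>M M2)" "integrable (M1 \<Otimes>\<^sub>M M2) (\<lambda>p. (w1 p)^2)"
    and w2: "w2 \<in> borel_measurable (M1 \<Otimes>\<^sub>M M2)" "integrable (M1 \<Otimes>\<^sub>M M2) (\<lambda>p. (w2 p)^2)"
    and B: "(\<integral>p. (w1 p - w2 p)^2 \<partial>(M1 \<Otimes>\<^sub>M M2)) \<le> B^2" "0 \<le> B"
  shows "\<bar>(\<integral>x. (\<integral>y. v (x, y) * w1 (x, y) \<partial>M2) \<partial>M1) - (\<integral>x. (\<integral>y. v (x, y) * w2 (x, y) \<partial>M2) \<partial>M1)\<bar>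
    \<le> sqrt (\<integral>p. (v p)^2 \<partial>(M1 \<Otimes>\<^sub>M M2)) * B"
proof -
  interpret M1: sigma_finite_measure M1 by fact
  interpret M2: sigma_finite_measure M2 by fact
  interpret P: pair_sigma_finite M1 M2 ..
  have vw1: "integrable (M1 \<Otimes>\<^sub>M M2) (\<lambda>p. v p * w1 p)"
    by (rule integrable_mult_of_square_integrable[OF v(1) w1(1) v(2) w1(2)])
  have vw2: "integrable (M1 \<Otimes>\<^sub>M M2) (\<lambda>p. v p * w2 p)"
    by (rule integrable_mult_of_square_integrable[OF v(1) w2(1) v(2) w2(2)])
  have "(\<integral>x. (\<integral>y. v (x, y) * w1 (x, y) \<partial>M2) \<partial>M1) - (\<integral>x. (\<integral>y. v (x, y) * w2 (x, y) \<partial>M2) \<partial>M1)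
      = (\<integral>p. v p * w1 p \<partial>(M1 \<Otimes>\<^sub>M M2)) - (\<integral>p. v p * w2 p \<partial>(M1 \<Otimes>\<^sub>M M2))"
    using P.integral_fst'[OF vw1] P.integral_fst'[OF vw2] by simp
  also have "\<dots> = (\<integral>p. v p * (w1 p - w2 p) \<partial>(M1 \<Otimes>\<^sub>M M2))"
    using vw1 vw2 by (simp add: right_diff_distrib)
  also have "\<bar>\<dots>\<bar> \<le> sqrt (\<integral>p. (v p)^2 \<partial>(M1 \<Otimes>\<^sub>M M2)) * sqrt (\<integral>p. (w1 p - w2 p)^2 \<partial>(M1 \<Otimes>\<^sub>M M2))"
  proof (rule abs_integral_mult_le)
    show "integrable (M1 \<Otimes>\<^sub>M M2) (\<lambda>p. (w1 p - w2 p)^2)"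
      by (rule integrable_square_diff[OF w1(1) w2(1) w1(2) w2(2)])
    show "integrable (M1 \<Otimes>\<^sub>M M2) (\<lambda>p. v p * (w1 p - w2 p))"
      using vw1 vw2 by (simp add: right_diff_distrib)
  qed (rule v(2))
  also have "\<dots> \<le> sqrt (\<integral>p. (v p)^2 \<partial>(M1 \<Otimes>\<^sub>M M2)) * B"
    using B real_sqrt_le_mono[OF B(1)] by (intro mult_left_mono) auto
  finally show ?thesis .
qed

lemma square_integrable_tensor:
  fixes c :: "'a \<Rightarrow> real" and u :: "'b \<Rightarrow> real"
  assumes "sigma_finite_measure M1" "sigma_finite_measure M2"
    and K: "K \<in> sets M1" "emeasure M1 K < \<infinity>"
    and c: "c \<in> borel_measurable M1" "\<And>x. \<bar>c x\<bar> \<le> C * indicator K x"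
    and u: "u \<in> borel_measurable M2" "integrable M2 (\<lambda>y. (u y)^2)"
  shows "integrable (M1 \<Otimes>\<^sub>M M2) (\<lambda>p. (c (fst p) * u (snd p))^2)"
    and "(\<integral>p. (c (fst p) * u (snd p))^2 \<partial>(M1 \<Otimes>\<^sub>M M2)) \<le> C^2 * measure M1 K * (\<integral>y. (u y)^2 \<partial>M2)"
proof -
  interpret M1: sigma_finite_measure M1 by fact
  interpret M2: sigma_finite_measure M2 by fact
  interpret P: pair_sigma_finite M1 M2 ..
  define h where "h p = C^2 * (indicator K (fst p) * (u (snd p))^2)" for p
  have h_fibre: "(\<integral>y. h (x, y) \<partial>M2) = C^2 * indicator K x * (\<integral>y. (u y)^2 \<partial>M2)" for x
    by (simp add: h_def mult.assoc)
  have hi: "integrable (M1 \<Otimes>\<^sub>M M2) h"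
  proof (rule P.Fubini_integrable)
    show "h \<in> borel_measurable (M1 \<Otimes>\<^sub>M M2)" unfolding h_def using u K by measurable
    have "(\<integral>y. norm (h (x, y)) \<partial>M2) = C^2 * indicator K x * (\<integral>y. (u y)^2 \<partial>M2)" for x
      by (simp add: h_def mult.assoc)
    then show "integrable M1 (\<lambda>x. \<integral>y. norm (h (x, y)) \<partial>M2)"
      using K by (simp add: integrable_real_indicator)
    show "AE x in M1. integrable M2 (\<lambda>y. h (x, y))"
      unfolding h_def using u by (intro AE_I2) auto
  qed
  have le: "(c (fst p) * u (snd p))^2 \<le> h p" for p
  proof -
    have "(c (fst p))^2 \<le> (C * indicator K (fst p))^2"
      using c(2)[of "fst p"] by (simp add: abs_le_square_iff[symmetric] abs_le_iff)
    then show ?thesis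
      by (cases "fst p \<in> K") (simp_all add: h_def power_mult_distrib mult_right_mono)
  qed
  show int: "integrable (M1 \<Otimes>\<^sub>M M2) (\<lambda>p. (c (fst p) * u (snd p))^2)"
    by (rule Bochner_Integration.integrable_bound[OF hi])
      (use c u le in \<open>auto intro!: AE_I2 order_trans[OF _ abs_ge_self]\<close>)
  have "(\<integral>p. (c (fst p) * u (snd p))^2 \<partial>(M1 \<Otimes>\<^sub>M M2)) \<le> (\<integral>p. h p \<partial>(M1 \<Otimes>\<^sub>M M2))"
    by (rule integral_mono[OF int hi le])
  also have "\<dots> = (\<integral>x. (\<integral>y. h (x, y) \<partial>M2) \<partial>M1)"
    using P.integral_fst'[OF hi] by simp
  also have "\<dots> = C^2 * measure M1 K * (\<integral>y. (u y)^2 \<partial>M2)"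
    unfolding h_fibre using K by (simp add: mult_ac)
  finally show "(\<integral>p. (c (fst p) * u (snd p))^2 \<partial>(M1 \<Otimes>\<^sub>M M2)) \<le> C^2 * measure M1 K * (\<integral>y. (u y)^2 \<partial>M2)" .
qed

lemma bounded_mult_square_integral_le:
  fixes f g :: "'a \<Rightarrow> real"
  assumes f: "f \<in> borel_measurable M" "integrable M (\<lambda>x. (f x)^2)"
    and g: "g \<in> borel_measurable M" "\<And>x. x \<in> space M \<Longrightarrow> \<bar>g x\<bar> \<le> G"
  shows "integrable M (\<lambda>x. (g x * f x)^2)"
    and "(\<integral>x. (g x * f x)^2 \<partial>M) \<le> G^2 * (\<integral>x. (f x)^2 \<partial>M)"
proof -
  have le: "(g x * f x)^2 \<le> G^2 * (f x)^2" if "x \<in> space M" for x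
    using g(2)[OF that] abs_le_square_iff[of "g x" G] by (simp add: power_mult_distrib mult_right_mono)
  have int_bound: "integrable M (\<lambda>x. G^2 * (f x)^2)" using f by simp
  show int: "integrable M (\<lambda>x. (g x * f x)^2)"
    by (rule Bochner_Integration.integrable_bound[OF int_bound])
      (use f g le in \<open>auto intro!: AE_I2 order_trans[OF _ abs_ge_self]\<close>)
  have "(\<integral>x. (g x * f x)^2 \<partial>M) \<le> (\<integral>x. G^2 * (f x)^2 \<partial>M)"
    by (rule integral_mono_AE[OF int int_bound]) (use le in \<open>auto intro: AE_I2\<close>)
  then show "(\<integral>x. (g x * f x)^2 \<partial>M) \<le> G^2 * (\<integral>x. (f x)^2 \<partial>M)" by simp
qed

lemma pair_integral_tensor_diff_le:
  fixes v :: "'a \<times> 'b \<Rightarrow> real" and c1 c2 :: "'a \<Rightarrow> real" and u1 u2 :: "'b \<Rightarrow> real"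
  assumes M1: "sigma_finite_measure M1" and M2: "sigma_finite_measure M2"
    and K: "K \<in> sets M1" "emeasure M1 K < \<infinity>"
    and v: "v \<in> borel_measurable (M1 \<Otimes>\<^sub>M M2)" "integrable (M1 \<Otimes>\<^sub>M M2) (\<lambda>p. (v p)^2)"
    and c1: "c1 \<in> borel_measurable M1" "\<And>x. \<bar>c1 x\<bar> \<le> C * indicator K x"
    and c2: "c2 \<in> borel_measurable M1" "\<And>x. \<bar>c2 x\<bar> \<le> C * indicator K x"
    and u1: "u1 \<in> borel_measurable M2" "integrable M2 (\<lambda>y. (u1 y)^2)"
    and u2: "u2 \<in> borel_measurable M2" "integrable M2 (\<lambda>y. (u2 y)^2)"
    and B: "(\<integral>p. (c1 (fst p) * u1 (snd p) - c2 (fst p) * u2 (snd p))^2 \<partial>(M1 \<Otimes>\<^sub>M M2)) \<le> B^2" "0 \<le> B"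
  shows "\<bar>(\<integral>x. (\<integral>y. v (x, y) * c1 x * u1 y \<partial>M2) \<partial>M1) - (\<integral>x. (\<integral>y. v (x, y) * c2 x * u2 y \<partial>M2) \<partial>M1)\<bar>
    \<le> sqrt (\<integral>p. (v p)^2 \<partial>(M1 \<Otimes>\<^sub>M M2)) * B"
proof -
  have "(\<lambda>p. c1 (fst p) * u1 (snd p)) \<in> borel_measurable (M1 \<Otimes>\<^sub>M M2)"
    "(\<lambda>p. c2 (fst p) * u2 (snd p)) \<in> borel_measurable (M1 \<Otimes>\<^sub>M M2)"
    using c1 c2 u1 u2 by measurable
  from pair_integral_diff_le[OF M1 M2 v this(1) square_integrable_tensor(1)[OF M1 M2 K c1 u1]
      this(2) square_integrable_tensor(1)[OF M1 M2 K c2 u2] B]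
  show ?thesis by (simp add: mult.assoc)
qed

section \<open>Environments and the rescaled lattice measures\<close>

lemma cube_eq_cbox: "cube r = cbox (vec (-r)) (vec r :: real ^ 'd::finite)"
  by (auto simp: cube_def mem_box_cart)

lemma sets_cube[measurable]: "cube r \<in> sets (borel :: (real ^ 'd::finite) measure)"
  unfolding cube_eq_cbox by (rule borel_closed) (rule closed_cbox)

lemma bounded_cube: "bounded (cube r :: (real ^ 'd::finite) set)"
  unfolding cube_eq_cbox by simp

lemma norm_gt_if_notin_cube:
  fixes z :: "real ^ 'd::finite"
  assumes "z \<notin> cube r"
  shows "r < norm z"
proof -
  obtain i where "\<not> (- r \<le> z $ i \<and> z $ i \<le> r)" using assms by (auto simp: cube_def)
  then have "r < \<bar>z $ i\<bar>" by linarith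
  also have "\<dots> \<le> norm z" by (rule component_le_norm_cart)
  finally show ?thesis .
qed

lemma Cc_bounded_on_cube:
  fixes \<phi> :: "real ^ 'd::finite \<Rightarrow> real"
  assumes "Cc \<phi>"
  obtains \<Phi> n where "0 \<le> \<Phi>" "\<And>z. \<bar>\<phi> z\<bar> \<le> \<Phi> * indicator (cube (real n)) z"
proof -
  obtain R where R: "\<And>x. R \<le> norm x \<Longrightarrow> \<phi> x = 0" using Cc_vanishes_outside_ball[OF assms] by blast
  obtain \<Phi> where \<Phi>: "0 \<le> \<Phi>" "\<And>x. \<bar>\<phi> x\<bar> \<le> \<Phi>" using Cc_bounded[OF assms] by blast
  have "\<bar>\<phi> z\<bar> \<le> \<Phi> * indicator (cube (real (nat \<lceil>R\<rceil>))) z" for z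
  proof (cases "z \<in> cube (real (nat \<lceil>R\<rceil>))")
    case False
    then show ?thesis using norm_gt_if_notin_cube[OF False] R real_nat_ceiling_ge[of R] by force
  qed (simp add: \<Phi>(2))
  then show ?thesis using that \<Phi>(1) by blast
qed

lemma Cc_inf_approx_on_cube:
  fixes \<phi> :: "real ^ 'd::finite \<Rightarrow> real"
  assumes "Cc \<phi>"
  obtains n C \<phi>s where "0 < n" "\<And>z. \<bar>\<phi> z\<bar> \<le> C * indicator (cube (real n)) z"
    "\<And>k. Cc_inf (\<phi>s k)" "\<And>k z. \<bar>\<phi>s k z\<bar> \<le> C * indicator (cube (real n)) z"
    "\<And>k z. \<bar>\<phi> z - \<phi>s k z\<bar> \<le> 1 / Suc k * indicator (cube (real n)) z"
proof -
  have cont: "continuous_on UNIV \<phi>" using assms by (simp add: Cc_def)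
  obtain R where R: "0 \<le> R" "\<And>x. R \<le> norm x \<Longrightarrow> \<phi> x = 0" using Cc_vanishes_outside_ball[OF assms] by blast
  obtain \<Phi> where \<Phi>: "\<And>x. \<bar>\<phi> x\<bar> \<le> \<Phi>" using Cc_bounded[OF assms] by blast
  have "\<forall>k. \<exists>\<phi>'. Cc_inf \<phi>' \<and> (\<forall>x. \<bar>\<phi> x - \<phi>' x\<bar> \<le> 1 / Suc k) \<and> (\<forall>x. R + 1 \<le> norm x \<longrightarrow> \<phi>' x = 0)"
  proof
    fix k
    show "\<exists>\<phi>'. Cc_inf \<phi>' \<and> (\<forall>x. \<bar>\<phi> x - \<phi>' x\<bar> \<le> 1 / Suc k) \<and> (\<forall>x. R + 1 \<le> norm x \<longrightarrow> \<phi>' x = 0)"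
      by (rule Cc_inf_uniform_approx[OF cont R, of "1 / Suc k"]) auto
  qed
  from choice[OF this] obtain \<phi>s where \<phi>s: "\<And>k. Cc_inf (\<phi>s k)" "\<And>k x. \<bar>\<phi> x - \<phi>s k x\<bar> \<le> 1 / Suc k"
      "\<And>k x. R + 1 \<le> norm x \<Longrightarrow> \<phi>s k x = 0"
    by blast
  define n where "n = Suc (nat \<lceil>R\<rceil>)"
  have \<phi>_0: "\<phi> z = 0" and \<phi>s_0: "\<phi>s k z = 0" if "z \<notin> cube (real n)" for k z
    using norm_gt_if_notin_cube[OF that] R(2) \<phi>s(3) real_nat_ceiling_ge[of R] unfolding n_def by force+
  have \<phi>_diff: "\<bar>\<phi> z - \<phi>s k z\<bar> \<le> 1 / Suc k * indicator (cube (real n)) z" for k z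
    using \<phi>s(2)[of z k] \<phi>_0[of z] \<phi>s_0[of z k] by (cases "z \<in> cube (real n)") auto
  have \<phi>_bound: "\<bar>\<phi> z\<bar> \<le> (\<Phi> + 1) * indicator (cube (real n)) z" for z
    using \<Phi>[of z] \<phi>_0[of z] by (cases "z \<in> cube (real n)") auto
  have \<phi>s_bound: "\<bar>\<phi>s k z\<bar> \<le> (\<Phi> + 1) * indicator (cube (real n)) z" for k z
  proof (cases "z \<in> cube (real n)")
    case True
    have "\<bar>\<phi> z - \<phi>s k z\<bar> \<le> 1" using \<phi>s(2)[of z k] by (rule order_trans) simp
    moreover have "\<bar>\<phi>s k z\<bar> \<le> \<bar>\<phi> z\<bar> + \<bar>\<phi> z - \<phi>s k z\<bar>" by linarith
    ultimately show ?thesis using True \<Phi>[of z] by simp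
  qed (simp add: \<phi>s_0)
  show ?thesis by (rule that[OF _ \<phi>_bound \<phi>s(1) \<phi>s_bound \<phi>_diff]) (simp add: n_def)
qed

lemma shift_bond:
  assumes "b \<in> bonds" shows "(\<lambda>y. y + x) ` b \<in> bonds"
proof -
  from assms obtain y e where "b = {y, y + e}" "e \<in> Bset" by (auto simp: bonds_def)
  then have "(\<lambda>y. y + x) ` b = {y + x, (y + x) + e}" by (auto simp: algebra_simps)
  with \<open>e \<in> Bset\<close> show ?thesis unfolding bonds_def by blast
qed

lemma shift_bond_iff: "(\<lambda>y. y + x) ` b \<in> bonds \<longleftrightarrow> b \<in> bonds"
  using shift_bond[of "(\<lambda>y. y + x) ` b" "- x"] shift_bond[of b x] by (auto simp: image_image)

lemma tau_r_in_Omega: "\<omega> \<in> Omega c0 \<Longrightarrow> tau_r y \<omega> \<in> Omega c0"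
  unfolding tau_r_def Omega_def tau_def by (auto simp: shift_bond_iff)

lemma compact_Omega: "compact (Omega c0 :: ('d::finite) env set)"
proof -
  define S where "S b = (if b \<in> bonds then {0..c0} else {0::real})" for b :: "(int^'d) set"
  have Omega_eq: "Omega c0 = PiE UNIV S"
    unfolding Omega_def S_def PiE_def Pi_def extensional_def by auto
  show ?thesis
  proof (cases "Omega c0 = ({} :: ('d::finite) env set)")
    case False
    have "compactin (product_topology (\<lambda>_. euclidean) UNIV) (PiE UNIV S)"
      unfolding compactin_PiE by (auto simp: S_def)
    then show ?thesis unfolding Omega_eq euclidean_product_topology by simp
  qed simp
qed

lemma continuous_on_Omega_bounded:
  assumes "continuous_on (Omega c0) (u :: ('d::finite) env \<Rightarrow> real)"
  obtains U where "0 \<le> U" "\<And>\<omega>. \<omega> \<in> Omega c0 \<Longrightarrow> \<bar>u \<omega>\<bar> \<le> U"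
proof -
  have "compact (u ` Omega c0)" by (rule compact_continuous_image[OF assms compact_Omega])
  then obtain U where "\<forall>y\<in>u ` Omega c0. norm y \<le> U"
    using compact_imp_bounded bounded_iff by metis
  then show ?thesis using that[of "max U 0"] by fastforce
qed

lemma space_mu: "standing c0 Q \<Longrightarrow> space (mu c0 Q) = Omega c0"
  unfolding standing_def mu_def
  using sets_eq_imp_space_eq[of Q "restrict_space borel (Omega c0)"]
  by (simp add: space_restrict_space)

lemma finite_measure_mu: "standing c0 Q \<Longrightarrow> finite_measure (mu c0 Q)"
  unfolding mu_def standing_def
  by (intro finite_measure.finite_measure_restricted finite_measureI) auto

lemma borel_measurable_mu_continuous:
  assumes "standing c0 Q" "continuous_on (Omega c0) (u :: _ \<Rightarrow> real)"
  shows "u \<in> borel_measurable (mu c0 Q)"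
proof -
  have "sets (mu c0 Q) = sets (restrict_space borel (Omega c0))"
    using assms(1) by (simp add: mu_def standing_def)
  moreover have "u \<in> borel_measurable (restrict_space borel (Omega c0))"
    using assms(2) by (rule borel_measurable_continuous_on_restrict)
  ultimately show ?thesis using measurable_cong_sets by blast
qed

lemma borel_measurable_mu_Psi:
  assumes "standing c0 Q" "regular_data c0 Q \<psi> f" "e \<in> Bset"
  shows "Psi \<psi> j e \<in> borel_measurable (mu c0 Q)"
proof -
  have "\<psi> j \<in> borel_measurable (MM c0 Q)"
    using assms(2) by (auto simp: regular_data_def L2sol_def L2_def)
  then have "\<psi> j \<in> borel_measurable (mu c0 Q \<Otimes>\<^sub>M count_space Bset)"
    unfolding MM_def using measurable_cong_sets[OF sets_density refl] by blast
  moreover have "(\<lambda>\<omega>. (\<omega>, e)) \<in> measurable (mu c0 Q) (mu c0 Q \<Otimes>\<^sub>M count_space Bset)"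
    using assms(3) by (intro measurable_Pair) auto
  ultimately have "(\<lambda>\<omega>. \<psi> j (\<omega>, e)) \<in> borel_measurable (mu c0 Q)"
    by (rule measurable_compose[rotated])
  moreover have "(\<lambda>\<omega>. wval \<omega> 0 e) \<in> borel_measurable (mu c0 Q)"
    unfolding wval_def using assms(1)
    by (intro borel_measurable_mu_continuous)
      (auto intro: continuous_on_subset[OF continuous_on_product_coordinates])
  ultimately show ?thesis unfolding Psi_def[abs_def] by measurable
qed

lemma sets_mu_eps[simp]: "sets (mu_eps \<omega> \<epsilon>) = UNIV"
  by (simp add: mu_eps_def)

lemma borel_measurable_mu_eps[simp]: "h \<in> borel_measurable (mu_eps \<omega> \<epsilon>)"
  by (simp add: measurable_def)

lemma AE_mu_eps_lattice: "AE z in mu_eps \<omega> \<epsilon>. z \<in> (\<lambda>x. \<epsilon> *\<^sub>R lat x) ` Cl \<omega>"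
  unfolding mu_eps_def by (subst AE_density, simp) (simp add: AE_count_space indicator_def)

lemma emeasure_mu_eps_singleton_finite: "emeasure (mu_eps \<omega> \<epsilon>) {a} < \<infinity>"
  unfolding mu_eps_def
  by (subst emeasure_density, simp, simp, subst nn_integral_indicator_singleton, simp)
    (simp add: ennreal_mult_less_top indicator_def)

lemma finite_int_box: "finite {x :: int ^ 'd::finite. \<forall>i. \<bar>x $ i\<bar> \<le> N}"
proof (rule finite_subset)
  show "{x :: int ^ 'd. \<forall>i. \<bar>x $ i\<bar> \<le> N} \<subseteq> vec_lambda ` (PiE UNIV (\<lambda>_. {-N..N}))"
  proof
    fix x :: "int ^ 'd" assume "x \<in> {x. \<forall>i. \<bar>x $ i\<bar> \<le> N}"
    then have "- N \<le> x $ i \<and> x $ i \<le> N" for i by (metis abs_le_D1 abs_le_D2 mem_Collect_eq minus_le_iff)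
    then have "(\<lambda>i. x $ i) \<in> PiE UNIV (\<lambda>_. {-N..N})" by (simp add: PiE_def extensional_def)
    moreover have "x = vec_lambda (\<lambda>i. x $ i)" by simp
    ultimately show "x \<in> vec_lambda ` (PiE UNIV (\<lambda>_. {-N..N}))" by blast
  qed
  show "finite (vec_lambda ` (PiE UNIV (\<lambda>_::'d. {-N..N})))"
    by (intro finite_imageI finite_PiE) auto
qed

text \<open>Only finitely many atoms of \<open>mu_eps \<omega> \<epsilon>\<close> lie in a cube, so every function vanishing outside a
  cube is integrable, whatever its values inside.\<close>

lemma integrable_mu_eps_cube_support:
  fixes h :: "real ^ 'd::finite \<Rightarrow> real"
  assumes \<epsilon>: "\<epsilon> > 0" and h: "\<And>z. z \<notin> cube r \<Longrightarrow> h z = 0"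
  shows "integrable (mu_eps \<omega> \<epsilon>) h"
proof -
  define N where "N = \<lceil>r / \<epsilon>\<rceil>"
  define A where "A = (\<lambda>x. \<epsilon> *\<^sub>R lat x) ` (Cl \<omega> \<inter> {x :: int ^ 'd. \<forall>i. \<bar>x $ i\<bar> \<le> N})"
  have "finite A" unfolding A_def using finite_int_box by auto
  have atoms_in_A: "\<epsilon> *\<^sub>R lat x \<in> A" if "x \<in> Cl \<omega>" "\<epsilon> *\<^sub>R lat x \<in> cube r" for x
  proof -
    have "\<bar>x $ i\<bar> \<le> N" for i
    proof -
      have "- r \<le> \<epsilon> * real_of_int (x $ i) \<and> \<epsilon> * real_of_int (x $ i) \<le> r"
        using that(2) unfolding cube_def lat_def by simp
      then have "\<bar>\<epsilon> * real_of_int (x $ i)\<bar> \<le> r" by linarith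
      then have "\<bar>real_of_int (x $ i)\<bar> \<le> r / \<epsilon>"
        using \<epsilon> by (simp add: abs_mult pos_le_divide_eq mult.commute)
      then have "real_of_int \<bar>x $ i\<bar> \<le> real_of_int N"
        using le_of_int_ceiling[of "r/\<epsilon>"] unfolding N_def by (simp only: of_int_abs)
      then show ?thesis by (simp only: of_int_le_iff)
    qed
    then show ?thesis using that by (auto simp: A_def)
  qed
  have sum_int: "integrable (mu_eps \<omega> \<epsilon>) (\<lambda>z. \<Sum>a\<in>A. h a * indicator {a} z)"
    by (intro Bochner_Integration.integrable_sum integrable_mult_right integrable_real_indicator
        sets_mu_eps[THEN equalityD2, THEN subsetD] UNIV_I emeasure_mu_eps_singleton_finite)
  have "AE z in mu_eps \<omega> \<epsilon>. (\<Sum>a\<in>A. h a * indicator {a} z) = h z"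
    using AE_mu_eps_lattice
  proof eventually_elim
    case (elim z)
    show ?case
    proof (cases "z \<in> A")
      case True
      then have "(\<Sum>a\<in>A. h a * indicator {a} z) = (\<Sum>a\<in>A. if a = z then h z else 0)"
        by (intro sum.cong) (auto simp: indicator_def)
      then show ?thesis using True \<open>finite A\<close> by simp
    next
      case False
      then have "z \<notin> cube r" using atoms_in_A elim by auto
      then show ?thesis using False h by (auto simp: indicator_def intro!: sum.neutral)
    qed
  qed
  from integrable_cong_AE[OF borel_measurable_mu_eps borel_measurable_mu_eps this] sum_int
  show ?thesis by simp
qed

lemma integral_square_mu_eps_le:
  fixes b :: "real ^ 'd::finite \<Rightarrow> real"
  assumes \<epsilon>: "\<epsilon> > 0" and b: "\<And>z. \<bar>b z\<bar> \<le> B * indicator (cube r) z"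
  shows "(\<integral>z. (b z)^2 \<partial>mu_eps \<omega> \<epsilon>) \<le> B^2 * measure (mu_eps \<omega> \<epsilon>) (cube r)"
proof -
  have b_sq: "(b z)^2 \<le> B^2 * indicator (cube r) z" for z
    using b[of z] abs_le_square_iff[of "b z" B] by (cases "z \<in> cube r") auto
  have b_0: "b z = 0" if "z \<notin> cube r" for z using b[of z] that by simp
  have "(\<integral>z. (b z)^2 \<partial>mu_eps \<omega> \<epsilon>) \<le> (\<integral>z. B^2 * indicator (cube r) z \<partial>mu_eps \<omega> \<epsilon>)"
    using b_sq by (intro integral_mono integrable_mu_eps_cube_support[OF \<epsilon>, where r=r]) (auto simp: b_0)
  then show ?thesis by simp
qed

lemma mu_eps_pairing_diff_le:
  fixes w b1 b2 :: "real ^ 'd::finite \<Rightarrow> real"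
  assumes \<epsilon>: "\<epsilon> > 0" and w: "integrable (mu_eps \<omega> \<epsilon>) (\<lambda>z. (w z)^2)"
    and b1: "\<And>z. z \<notin> cube r \<Longrightarrow> b1 z = 0" and b2: "\<And>z. z \<notin> cube r \<Longrightarrow> b2 z = 0"
    and B: "(\<integral>z. (b1 z - b2 z)^2 \<partial>mu_eps \<omega> \<epsilon>) \<le> B^2" "0 \<le> B"
  shows "\<bar>(\<integral>z. w z * b1 z \<partial>mu_eps \<omega> \<epsilon>) - (\<integral>z. w z * b2 z \<partial>mu_eps \<omega> \<epsilon>)\<bar>
    \<le> sqrt (\<integral>z. (w z)^2 \<partial>mu_eps \<omega> \<epsilon>) * B"
proof -
  have int: "integrable (mu_eps \<omega> \<epsilon>) h" if "\<And>z. z \<notin> cube r \<Longrightarrow> h z = 0" for h :: "real ^ 'd \<Rightarrow> real"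
    by (rule integrable_mu_eps_cube_support[OF \<epsilon> that])
  have "(\<integral>z. w z * b1 z \<partial>mu_eps \<omega> \<epsilon>) - (\<integral>z. w z * b2 z \<partial>mu_eps \<omega> \<epsilon>)
      = (\<integral>z. w z * (b1 z - b2 z) \<partial>mu_eps \<omega> \<epsilon>)"
    by (subst Bochner_Integration.integral_diff[symmetric])
      (auto intro!: int simp: b1 b2 right_diff_distrib)
  also have "\<bar>\<dots>\<bar> \<le> sqrt (\<integral>z. (w z)^2 \<partial>mu_eps \<omega> \<epsilon>) * sqrt (\<integral>z. (b1 z - b2 z)^2 \<partial>mu_eps \<omega> \<epsilon>)"
    by (rule abs_integral_mult_le[OF w]) (auto intro!: int simp: b1 b2)
  also have "\<dots> \<le> sqrt (\<integral>z. (w z)^2 \<partial>mu_eps \<omega> \<epsilon>) * B"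
    using B real_sqrt_le_mono[OF B(1)] by (intro mult_left_mono) auto
  finally show ?thesis .
qed

lemma integrable_square_continuous_on_Omega:
  assumes "standing c0 Q" "continuous_on (Omega c0) u"
  shows "integrable (mu c0 Q) (\<lambda>y. (u y :: real)^2)"
proof -
  interpret mu: finite_measure "mu c0 Q" using assms(1) by (rule finite_measure_mu)
  obtain U where U: "0 \<le> U" "\<And>y. y \<in> Omega c0 \<Longrightarrow> \<bar>u y\<bar> \<le> U"
    using continuous_on_Omega_bounded[OF assms(2)] by blast
  show ?thesis
    by (rule mu.integrable_const_bound[where B = "U^2"])
      (use U borel_measurable_mu_continuous[OF assms] space_mu[OF assms(1)]
        in \<open>auto simp: power2_le_iff_abs_le\<close>)
qed

lemma Omega1_eventually_measure_cube_le:
  fixes \<omega> :: "'d::finite env"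
  assumes "\<omega> \<in> Omega1 c0 Q" "0 < r"
  obtains M where "0 \<le> M" "\<forall>\<^sub>F \<epsilon> in at_right 0. measure (mu_eps \<omega> \<epsilon>) (cube r) \<le> M"
proof -
  have "((\<lambda>\<epsilon>. measure (mu_eps \<omega> \<epsilon>) (cube r)) \<longlongrightarrow> mdens c0 Q * (2 * r) ^ CARD('d)) (at_right 0)"
    using assms unfolding Omega1_def by blast
  from order_tendstoD(2)[OF this, of "mdens c0 Q * (2 * r) ^ CARD('d) + 1"]
  have "\<forall>\<^sub>F \<epsilon> in at_right 0. measure (mu_eps \<omega> \<epsilon>) (cube r) \<le> mdens c0 Q * (2 * r) ^ CARD('d) + 1"
    by (auto elim: eventually_mono)
  moreover have "0 \<le> mdens c0 Q * (2 * r) ^ CARD('d) + 1" using assms(2) by (simp add: mdens_def)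
  ultimately show ?thesis using that by blast
qed

lemma eventually_uniform_square_mu_eps_le:
  fixes c1 c2 :: "real ^ 'd::finite \<Rightarrow> real" and u :: "'d env \<Rightarrow> real"
  assumes \<omega>: "\<omega> \<in> Omega c0" and c: "\<And>z. \<bar>c1 z - c2 z\<bar> \<le> \<delta> * indicator (cube r) z"
    and u: "\<And>y. y \<in> Omega c0 \<Longrightarrow> \<bar>u y\<bar> \<le> U"
    and M: "\<forall>\<^sub>F \<epsilon> in at_right 0. measure (mu_eps \<omega> \<epsilon>) (cube r) \<le> M"
  shows "\<forall>\<^sub>F \<epsilon> in at_right 0. (\<integral>z. (c1 z * u (tau_r ((1 / \<epsilon>) *\<^sub>R z) \<omega>)
      - c2 z * u (tau_r ((1 / \<epsilon>) *\<^sub>R z) \<omega>))^2 \<partial>mu_eps \<omega> \<epsilon>) \<le> (\<delta> * U)^2 * M"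
  using eventually_at_right_less M
proof eventually_elim
  case (elim \<epsilon>)
  let ?T = "\<lambda>z. tau_r ((1 / \<epsilon>) *\<^sub>R z) \<omega>"
  have "\<bar>c1 z * u (?T z) - c2 z * u (?T z)\<bar> \<le> \<delta> * indicator (cube r) z * U" for z
    using mult_mono[OF c[of z] u[OF tau_r_in_Omega[OF \<omega>]] order_trans[OF abs_ge_zero c[of z]]]
    by (simp add: left_diff_distrib[symmetric] abs_mult)
  then have "(\<integral>z. (c1 z * u (?T z) - c2 z * u (?T z))^2 \<partial>mu_eps \<omega> \<epsilon>)
      \<le> (\<delta> * U)^2 * measure (mu_eps \<omega> \<epsilon>) (cube r)"
    by (intro integral_square_mu_eps_le[OF elim(1)]) (simp add: mult_ac)
  also have "\<dots> \<le> (\<delta> * U)^2 * M" using elim(2) by (rule mult_left_mono) simp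
  finally show ?case .
qed

lemma eventually_weighted_square_mu_eps_le:
  fixes \<phi> :: "real ^ 'd::finite \<Rightarrow> real" and g a b :: "'d env \<Rightarrow> real"
  assumes \<omega>: "\<omega> \<in> Omega c0" and \<phi>: "\<And>z. \<bar>\<phi> z\<bar> \<le> \<Phi> * indicator (cube r) z"
    and g: "\<And>y. y \<in> Omega c0 \<Longrightarrow> \<bar>g y\<bar> \<le> G"
    and lim: "((\<lambda>\<epsilon>. \<integral>z. indicator (cube r) z *
        (a (tau_r ((1 / \<epsilon>) *\<^sub>R z) \<omega>) - b (tau_r ((1 / \<epsilon>) *\<^sub>R z) \<omega>))^2 \<partial>mu_eps \<omega> \<epsilon>) \<longlongrightarrow> L) (at_right 0)"
    and "L < X"
  shows "\<forall>\<^sub>F \<epsilon> in at_right 0. (\<integral>z. (\<phi> z * (g (tau_r ((1 / \<epsilon>) *\<^sub>R z) \<omega>) * b (tau_r ((1 / \<epsilon>) *\<^sub>R z) \<omega>))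
      - \<phi> z * (g (tau_r ((1 / \<epsilon>) *\<^sub>R z) \<omega>) * a (tau_r ((1 / \<epsilon>) *\<^sub>R z) \<omega>)))^2 \<partial>mu_eps \<omega> \<epsilon>)
    \<le> (\<Phi> * G)^2 * X"
  using order_tendstoD(2)[OF lim \<open>L < X\<close>] eventually_at_right_less
proof eventually_elim
  case (elim \<epsilon>)
  let ?T = "\<lambda>z. tau_r ((1 / \<epsilon>) *\<^sub>R z) \<omega>"
  have \<phi>_0: "\<phi> z = 0" if "z \<notin> cube r" for z using \<phi>[of z] that by simp
  have pointwise: "(\<phi> z * (g (?T z) * b (?T z)) - \<phi> z * (g (?T z) * a (?T z)))^2
      \<le> (\<Phi> * G)^2 * (indicator (cube r) z * (a (?T z) - b (?T z))^2)" for z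
  proof (cases "z \<in> cube r")
    case True
    have "(\<phi> z)^2 \<le> \<Phi>^2" using \<phi>[of z] True by (simp add: abs_le_square_iff[symmetric])
    moreover have "(g (?T z))^2 \<le> G^2"
      using g[OF tau_r_in_Omega[OF \<omega>]] g[OF \<omega>] by (simp add: power2_le_iff_abs_le[symmetric])
    ultimately have "(\<phi> z)^2 * ((g (?T z))^2 * (a (?T z) - b (?T z))^2)
        \<le> \<Phi>^2 * (G^2 * (a (?T z) - b (?T z))^2)"
      by (intro mult_mono mult_right_mono) auto
    moreover have "(\<phi> z * (g (?T z) * b (?T z)) - \<phi> z * (g (?T z) * a (?T z)))^2
        = (\<phi> z)^2 * ((g (?T z))^2 * (a (?T z) - b (?T z))^2)"
      by (simp add: power2_eq_square algebra_simps)
    ultimately show ?thesis using True by (simp add: power_mult_distrib mult_ac)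
  next
    case False
    then show ?thesis using \<phi>[of z] by simp
  qed
  have "(\<integral>z. (\<phi> z * (g (?T z) * b (?T z)) - \<phi> z * (g (?T z) * a (?T z)))^2 \<partial>mu_eps \<omega> \<epsilon>)
      \<le> (\<integral>z. (\<Phi> * G)^2 * (indicator (cube r) z * (a (?T z) - b (?T z))^2) \<partial>mu_eps \<omega> \<epsilon>)"
    using pointwise \<phi>_0
    by (intro integral_mono integrable_mu_eps_cube_support[OF elim(2), where r = r]) auto
  also have "\<dots> \<le> (\<Phi> * G)^2 * X"
    using elim(1) by (simp add: mult_left_mono)
  finally show ?case .
qed

section \<open>Two-scale limits against more general test functions\<close>

lemma tendsto_by_approximation:
  fixes I :: "'a \<Rightarrow> real" and A :: "nat \<Rightarrow> 'a \<Rightarrow> real"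
  assumes A: "\<And>k. (A k \<longlongrightarrow> a k) F"
    and close: "\<And>k. \<forall>\<^sub>F x in F. \<bar>I x - A k x\<bar> \<le> e k"
    and limit_close: "\<And>k. \<bar>J - a k\<bar> \<le> e k"
    and e: "e \<longlonglongrightarrow> 0"
  shows "(I \<longlongrightarrow> J) F"
proof (rule tendstoI)
  fix \<eta> :: real assume \<eta>: "\<eta> > 0"
  have "\<forall>\<^sub>F k in sequentially. e k < \<eta> / 3" using e \<eta> by (intro order_tendstoD(2)) auto
  then obtain k where k: "e k < \<eta> / 3" by (auto simp: eventually_sequentially)
  have "\<forall>\<^sub>F x in F. dist (A k x) (a k) < \<eta> / 3" using tendstoD[OF A, of "\<eta> / 3"] \<eta> by simp
  then show "\<forall>\<^sub>F x in F. dist (I x) J < \<eta>"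
    using close[of k]
  proof eventually_elim
    case (elim x)
    then show ?case using limit_close[of k] k by (simp add: dist_real_def) (smt (verit))
  qed
qed

lemma two_scale_weak_norm_eventually_bounded:
  assumes "two_scale_weak c0 Q \<omega> v\<epsilon> v"
  obtains V where "0 \<le> V" "\<forall>\<^sub>F \<epsilon> in at_right 0. sqrt (\<integral>x. (v\<epsilon> \<epsilon> x)^2 \<partial>mu_eps \<omega> \<epsilon>) \<le> V"
proof -
  have "Limsup (at_right 0) (\<lambda>\<epsilon>. ereal (sqrt (\<integral>x. (v\<epsilon> \<epsilon> x)^2 \<partial>mu_eps \<omega> \<epsilon>))) < \<infinity>"
    using assms unfolding two_scale_weak_def by blast
  moreover have "\<exists>C. L < ereal C" if "L < \<infinity>" for L :: ereal
    using that by (cases L) (auto intro: gt_ex)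
  ultimately obtain C
    where "Limsup (at_right 0) (\<lambda>\<epsilon>. ereal (sqrt (\<integral>x. (v\<epsilon> \<epsilon> x)^2 \<partial>mu_eps \<omega> \<epsilon>))) < ereal C"
    by blast
  from Limsup_lessD[OF this]
  have "\<forall>\<^sub>F \<epsilon> in at_right 0. sqrt (\<integral>x. (v\<epsilon> \<epsilon> x)^2 \<partial>mu_eps \<omega> \<epsilon>) \<le> max C 0"
    by eventually_elim auto
  then show ?thesis by (rule that[rotated]) simp
qed

text \<open>The common shape of the two approximation steps: two-scale limits pass from the test
  functions \<open>\<phi>s k x * us k \<omega>'\<close> to \<open>\<phi> x * u \<omega>'\<close> once the latter is approximated in \<open>L\<^sup>2\<close>
  both at scale \<open>\<epsilon>\<close>, uniformly for small \<open>\<epsilon>\<close>, and in the limit.\<close>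

lemma two_scale_tensor_test_by_approximation:
  fixes \<phi> :: "real ^ 'd::finite \<Rightarrow> real" and \<phi>s :: "nat \<Rightarrow> real ^ 'd \<Rightarrow> real"
    and u :: "'d env \<Rightarrow> real" and us :: "nat \<Rightarrow> 'd env \<Rightarrow> real"
  assumes st: "standing c0 Q" and ts: "two_scale_weak c0 Q \<omega> v\<epsilon> v"
    and \<phi>: "\<phi> \<in> borel_measurable lborel" "\<And>z. \<bar>\<phi> z\<bar> \<le> C * indicator (cube r) z"
    and \<phi>s: "\<And>k. \<phi>s k \<in> borel_measurable lborel" "\<And>k z. \<bar>\<phi>s k z\<bar> \<le> C * indicator (cube r) z"
    and u: "u \<in> borel_measurable (mu c0 Q)" "integrable (mu c0 Q) (\<lambda>y. (u y)^2)"
    and us: "\<And>k. us k \<in> borel_measurable (mu c0 Q)" "\<And>k. integrable (mu c0 Q) (\<lambda>y. (us k y)^2)"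
    and eps_close: "\<And>k. \<forall>\<^sub>F \<epsilon> in at_right 0. (\<integral>z. (\<phi> z * u (tau_r ((1 / \<epsilon>) *\<^sub>R z) \<omega>)
      - \<phi>s k z * us k (tau_r ((1 / \<epsilon>) *\<^sub>R z) \<omega>))^2 \<partial>mu_eps \<omega> \<epsilon>) \<le> (\<beta> k)^2"
    and limit_close: "\<And>k. (\<integral>p. (\<phi> (fst p) * u (snd p) - \<phi>s k (fst p) * us k (snd p))^2
      \<partial>(lborel \<Otimes>\<^sub>M mu c0 Q)) \<le> (\<gamma> k)^2"
    and \<beta>: "\<And>k. 0 \<le> \<beta> k" "\<beta> \<longlonglongrightarrow> 0" and \<gamma>: "\<And>k. 0 \<le> \<gamma> k" "\<gamma> \<longlonglongrightarrow> 0"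
    and lim: "\<And>k. ((\<lambda>\<epsilon>. \<integral>z. v\<epsilon> \<epsilon> z * \<phi>s k z * us k (tau_r ((1 / \<epsilon>) *\<^sub>R z) \<omega>) \<partial>mu_eps \<omega> \<epsilon>)
      \<longlongrightarrow> (\<integral>x. (\<integral>y. v (x, y) * \<phi>s k x * us k y \<partial>mu c0 Q) \<partial>lborel)) (at_right 0)"
  shows "((\<lambda>\<epsilon>. \<integral>z. v\<epsilon> \<epsilon> z * \<phi> z * u (tau_r ((1 / \<epsilon>) *\<^sub>R z) \<omega>) \<partial>mu_eps \<omega> \<epsilon>)
    \<longlongrightarrow> (\<integral>x. (\<integral>y. v (x, y) * \<phi> x * u y \<partial>mu c0 Q) \<partial>lborel)) (at_right 0)"
proof -
  interpret mu: finite_measure "mu c0 Q" using st by (rule finite_measure_mu)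
  obtain V where V: "0 \<le> V" "\<forall>\<^sub>F \<epsilon> in at_right 0. sqrt (\<integral>x. (v\<epsilon> \<epsilon> x)^2 \<partial>mu_eps \<omega> \<epsilon>) \<le> V"
    using ts by (rule two_scale_weak_norm_eventually_bounded)
  have v: "v \<in> borel_measurable (lborel \<Otimes>\<^sub>M mu c0 Q)" "integrable (lborel \<Otimes>\<^sub>M mu c0 Q) (\<lambda>p. (v p)^2)"
    and v\<epsilon>: "\<And>\<epsilon>. \<epsilon> > 0 \<Longrightarrow> integrable (mu_eps \<omega> \<epsilon>) (\<lambda>x. (v\<epsilon> \<epsilon> x)^2)"
    using ts by (auto simp: two_scale_weak_def L2_def)
  have cube: "cube r \<in> sets lborel" "emeasure lborel (cube r :: (real ^ 'd) set) < \<infinity>"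
    by (simp, rule emeasure_bounded_finite[OF bounded_cube])
  have \<phi>_0: "\<phi> z = 0" and \<phi>s_0: "\<phi>s k z = 0" if "z \<notin> cube r" for k z
    using \<phi>(2)[of z] \<phi>s(2)[of k z] that by simp_all
  define N where "N = sqrt (\<integral>p. (v p)^2 \<partial>(lborel \<Otimes>\<^sub>M mu c0 Q))"
  have "0 \<le> N" unfolding N_def by simp
  show ?thesis
  proof (rule tendsto_by_approximation[OF lim])
    show "(\<lambda>k. V * \<beta> k + N * \<gamma> k) \<longlonglongrightarrow> 0"
      using tendsto_add[OF tendsto_mult_right_zero[OF \<beta>(2)] tendsto_mult_right_zero[OF \<gamma>(2)]] by simp
  next
    fix k
    show "\<forall>\<^sub>F \<epsilon> in at_right 0. \<bar>(\<integral>z. v\<epsilon> \<epsilon> z * \<phi> z * u (tau_r ((1 / \<epsilon>) *\<^sub>R z) \<omega>) \<partial>mu_eps \<omega> \<epsilon>)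
        - (\<integral>z. v\<epsilon> \<epsilon> z * \<phi>s k z * us k (tau_r ((1 / \<epsilon>) *\<^sub>R z) \<omega>) \<partial>mu_eps \<omega> \<epsilon>)\<bar> \<le> V * \<beta> k + N * \<gamma> k"
      using eventually_at_right_less V(2) eps_close[of k]
    proof eventually_elim
      case (elim \<epsilon>)
      have "\<bar>(\<integral>z. v\<epsilon> \<epsilon> z * \<phi> z * u (tau_r ((1 / \<epsilon>) *\<^sub>R z) \<omega>) \<partial>mu_eps \<omega> \<epsilon>)
          - (\<integral>z. v\<epsilon> \<epsilon> z * \<phi>s k z * us k (tau_r ((1 / \<epsilon>) *\<^sub>R z) \<omega>) \<partial>mu_eps \<omega> \<epsilon>)\<bar>
          \<le> sqrt (\<integral>x. (v\<epsilon> \<epsilon> x)^2 \<partial>mu_eps \<omega> \<epsilon>) * \<beta> k"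
        unfolding mult.assoc
        by (rule mu_eps_pairing_diff_le[OF elim(1) v\<epsilon>[OF elim(1)] _ _ elim(3) \<beta>(1), where r = r])
          (simp_all add: \<phi>_0 \<phi>s_0)
      also have "\<dots> \<le> V * \<beta> k" using elim(2) \<beta>(1) by (rule mult_right_mono)
      finally show ?case using mult_nonneg_nonneg[OF \<open>0 \<le> N\<close> \<gamma>(1)[of k]] by linarith
    qed
    have "\<bar>(\<integral>x. (\<integral>y. v (x, y) * \<phi> x * u y \<partial>mu c0 Q) \<partial>lborel)
        - (\<integral>x. (\<integral>y. v (x, y) * \<phi>s k x * us k y \<partial>mu c0 Q) \<partial>lborel)\<bar> \<le> N * \<gamma> k"
      unfolding N_def by (rule pair_integral_tensor_diff_le[OF sigma_finite_lborel
            mu.sigma_finite_measure_axioms cube v \<phi> \<phi>s(1,2) u us(1,2) limit_close \<gamma>(1)])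
    then show "\<bar>(\<integral>x. (\<integral>y. v (x, y) * \<phi> x * u y \<partial>mu c0 Q) \<partial>lborel)
        - (\<integral>x. (\<integral>y. v (x, y) * \<phi>s k x * us k y \<partial>mu c0 Q) \<partial>lborel)\<bar> \<le> V * \<beta> k + N * \<gamma> k"
      using mult_nonneg_nonneg[OF V(1) \<beta>(1)[of k]] by linarith
  qed
qed

lemma two_scale_weak_Cc_test:
  fixes \<phi> :: "real ^ 'd::finite \<Rightarrow> real" and u :: "'d env \<Rightarrow> real"
  assumes st: "standing c0 Q" and \<omega>: "\<omega> \<in> Omega1 c0 Q" and ts: "two_scale_weak c0 Q \<omega> v\<epsilon> v"
    and \<phi>: "Cc \<phi>" and u: "continuous_on (Omega c0) u"
  shows "((\<lambda>\<epsilon>. \<integral>x. v\<epsilon> \<epsilon> x * \<phi> x * u (tau_r ((1 / \<epsilon>) *\<^sub>R x) \<omega>) \<partial>mu_eps \<omega> \<epsilon>)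
    \<longlongrightarrow> (\<integral>x. (\<integral>\<omega>'. v (x, \<omega>') * \<phi> x * u \<omega>' \<partial>mu c0 Q) \<partial>lborel)) (at_right 0)"
proof -
  interpret mu: finite_measure "mu c0 Q" using st by (rule finite_measure_mu)
  have \<omega>_Omega: "\<omega> \<in> Omega c0" using \<omega> by (simp add: Omega1_def Omega0_def)
  obtain n C \<phi>s where \<phi>s: "0 < n" "\<And>z. \<bar>\<phi> z\<bar> \<le> C * indicator (cube (real n)) z"
      "\<And>k. Cc_inf (\<phi>s k)" "\<And>k z. \<bar>\<phi>s k z\<bar> \<le> C * indicator (cube (real n)) z"
      and \<phi>_diff: "\<And>k z. \<bar>\<phi> z - \<phi>s k z\<bar> \<le> 1 / Suc k * indicator (cube (real n)) z"
    by (metis Cc_inf_approx_on_cube[OF \<phi>])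
  obtain U where U: "0 \<le> U" "\<And>y. y \<in> Omega c0 \<Longrightarrow> \<bar>u y\<bar> \<le> U"
    using continuous_on_Omega_bounded[OF u] by blast
  obtain Mc where Mc: "0 \<le> Mc" "\<forall>\<^sub>F \<epsilon> in at_right 0. measure (mu_eps \<omega> \<epsilon>) (cube (real n)) \<le> Mc"
    using Omega1_eventually_measure_cube_le[OF \<omega>, of "real n"] \<phi>s(1) by auto
  have \<phi>_meas: "\<phi> \<in> borel_measurable lborel" using \<phi> by (simp add: Cc_def borel_measurable_continuous_onI)
  have \<phi>s_meas: "\<phi>s k \<in> borel_measurable lborel" for k
  proof -
    have "continuous_on UNIV (\<phi>s k)" using \<phi>s(3)[of k] by (auto simp: Cc_inf_def dest: spec[of _ 0])
    then show ?thesis by (simp add: borel_measurable_continuous_onI)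
  qed
  have u_meas: "u \<in> borel_measurable (mu c0 Q)" by (rule borel_measurable_mu_continuous[OF st u])
  have u_sq: "integrable (mu c0 Q) (\<lambda>y. (u y)^2)" by (rule integrable_square_continuous_on_Omega[OF st u])
  have cube: "cube (real n) \<in> sets lborel" "emeasure lborel (cube (real n) :: (real ^ 'd) set) < \<infinity>"
    by (simp, rule emeasure_bounded_finite[OF bounded_cube])
  define vol where "vol = measure lborel (cube (real n) :: (real ^ 'd) set)"
  define Nu where "Nu = (\<integral>y. (u y)^2 \<partial>mu c0 Q)"
  have "0 \<le> Nu" "0 \<le> vol" by (simp_all add: Nu_def vol_def)
  have inv: "(\<lambda>k. 1 / real (Suc k)) \<longlonglongrightarrow> 0" using LIMSEQ_Suc[OF lim_1_over_n] by simp
  show ?thesis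
  proof (rule two_scale_tensor_test_by_approximation[OF st ts \<phi>_meas \<phi>s(2) \<phi>s_meas \<phi>s(4)
        u_meas u_sq, where us = "\<lambda>_. u"
        and \<beta> = "\<lambda>k. 1 / Suc k * U * sqrt Mc" and \<gamma> = "\<lambda>k. 1 / Suc k * sqrt (vol * Nu)"])
    fix k
    show "((\<lambda>\<epsilon>. \<integral>z. v\<epsilon> \<epsilon> z * \<phi>s k z * u (tau_r ((1 / \<epsilon>) *\<^sub>R z) \<omega>) \<partial>mu_eps \<omega> \<epsilon>)
        \<longlongrightarrow> (\<integral>x. (\<integral>y. v (x, y) * \<phi>s k x * u y \<partial>mu c0 Q) \<partial>lborel)) (at_right 0)"
      using ts[unfolded two_scale_weak_def, THEN conjunct2, THEN conjunct2, THEN conjunct2,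
          rule_format, OF \<phi>s(3) u] .
    show "\<forall>\<^sub>F \<epsilon> in at_right 0. (\<integral>z. (\<phi> z * u (tau_r ((1 / \<epsilon>) *\<^sub>R z) \<omega>)
        - \<phi>s k z * u (tau_r ((1 / \<epsilon>) *\<^sub>R z) \<omega>))^2 \<partial>mu_eps \<omega> \<epsilon>) \<le> (1 / Suc k * U * sqrt Mc)^2"
      using eventually_uniform_square_mu_eps_le[where u = u, OF \<omega>_Omega \<phi>_diff[where k=k] U(2) Mc(2)] Mc(1)
      by (simp add: power_mult_distrib power_divide)
    have "(\<integral>p. ((\<phi> (fst p) - \<phi>s k (fst p)) * u (snd p))^2 \<partial>(lborel \<Otimes>\<^sub>M mu c0 Q))
        \<le> (1 / Suc k)^2 * vol * Nu"
      unfolding vol_def Nu_def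
      by (rule square_integrable_tensor(2)[OF sigma_finite_lborel mu.sigma_finite_measure_axioms
            cube _ \<phi>_diff u_meas u_sq])
        (use \<phi>_meas \<phi>s_meas in measurable)
    moreover have "(\<phi> (fst p) * u (snd p) - \<phi>s k (fst p) * u (snd p))^2
        = ((\<phi> (fst p) - \<phi>s k (fst p)) * u (snd p))^2" for p
      by (simp add: left_diff_distrib)
    moreover have "(1 / Suc k * sqrt (vol * Nu))^2 = (1 / Suc k)^2 * vol * Nu"
      using \<open>0 \<le> Nu\<close> \<open>0 \<le> vol\<close> by (simp add: power_mult_distrib power_divide)
    ultimately show "(\<integral>p. (\<phi> (fst p) * u (snd p) - \<phi>s k (fst p) * u (snd p))^2 \<partial>(lborel \<Otimes>\<^sub>M mu c0 Q))
        \<le> (1 / Suc k * sqrt (vol * Nu))^2"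
      by simp
    show "0 \<le> 1 / Suc k * U * sqrt Mc" "0 \<le> 1 / Suc k * sqrt (vol * Nu)"
      using U(1) Mc(1) \<open>0 \<le> Nu\<close> \<open>0 \<le> vol\<close> by simp_all
  next
    show "(\<lambda>k. 1 / Suc k * U * sqrt Mc) \<longlonglongrightarrow> 0" "(\<lambda>k. 1 / Suc k * sqrt (vol * Nu)) \<longlonglongrightarrow> 0"
      by (intro tendsto_mult_left_zero inv)+
  qed (use u_meas u_sq in auto)
qed

lemma two_scale_weak_L2_weight:
  fixes \<phi> :: "real ^ 'd::finite \<Rightarrow> real" and g h :: "'d env \<Rightarrow> real" and hs :: "nat \<Rightarrow> 'd env \<Rightarrow> real"
  assumes st: "standing c0 Q" and \<omega>: "\<omega> \<in> Omega1 c0 Q" and ts: "two_scale_weak c0 Q \<omega> v\<epsilon> v"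
    and \<phi>: "Cc \<phi>" and g: "continuous_on (Omega c0) g" and h: "h \<in> borel_measurable (mu c0 Q)"
    and hs: "\<And>k. continuous_on (Omega c0) (hs k)"
      "\<And>k. integrable (mu c0 Q) (\<lambda>\<omega>'. (hs k \<omega>' - h \<omega>')^2)"
      "(\<lambda>k. \<integral>\<omega>'. (hs k \<omega>' - h \<omega>')^2 \<partial>mu c0 Q) \<longlonglongrightarrow> 0"
    and ergodic: "\<And>k n. ((\<lambda>\<epsilon>. \<integral>z. indicator (cube (real n)) z *
        (hs k (tau_r ((1 / \<epsilon>) *\<^sub>R z) \<omega>) - h (tau_r ((1 / \<epsilon>) *\<^sub>R z) \<omega>))^2 \<partial>mu_eps \<omega> \<epsilon>)
      \<longlongrightarrow> (2 * real n) ^ CARD('d) * (\<integral>\<omega>'. (hs k \<omega>' - h \<omega>')^2 \<partial>mu c0 Q)) (at_right 0)"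
  shows "((\<lambda>\<epsilon>. \<integral>x. v\<epsilon> \<epsilon> x * \<phi> x * g (tau_r ((1 / \<epsilon>) *\<^sub>R x) \<omega>) * h (tau_r ((1 / \<epsilon>) *\<^sub>R x) \<omega>)
      \<partial>mu_eps \<omega> \<epsilon>)
    \<longlongrightarrow> (\<integral>x. (\<integral>\<omega>'. v (x, \<omega>') * \<phi> x * g \<omega>' * h \<omega>' \<partial>mu c0 Q) \<partial>lborel)) (at_right 0)"
proof -
  interpret mu: finite_measure "mu c0 Q" using st by (rule finite_measure_mu)
  have \<omega>_Omega: "\<omega> \<in> Omega c0" using \<omega> by (simp add: Omega1_def Omega0_def)
  obtain \<Phi> n where \<Phi>: "0 \<le> \<Phi>" and \<phi>_bound: "\<And>z. \<bar>\<phi> z\<bar> \<le> \<Phi> * indicator (cube (real n)) z"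
    using Cc_bounded_on_cube[OF \<phi>] by blast
  obtain G where G: "0 \<le> G" "\<And>y. y \<in> Omega c0 \<Longrightarrow> \<bar>g y\<bar> \<le> G"
    using continuous_on_Omega_bounded[OF g] by blast
  have \<phi>_meas: "\<phi> \<in> borel_measurable lborel" using \<phi> by (simp add: Cc_def borel_measurable_continuous_onI)
  have g_meas: "g \<in> borel_measurable (mu c0 Q)" by (rule borel_measurable_mu_continuous[OF st g])
  have hs_meas: "hs k \<in> borel_measurable (mu c0 Q)" for k by (rule borel_measurable_mu_continuous[OF st hs(1)])
  have ghs_sq: "integrable (mu c0 Q) (\<lambda>y. (g y * hs k y)^2)" for k
    using integrable_square_continuous_on_Omega[OF st continuous_on_mult[OF g hs(1)]] .
  define D where "D k = (\<integral>\<omega>'. (hs k \<omega>' - h \<omega>')^2 \<partial>mu c0 Q)" for k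
  have diff_meas: "(\<lambda>y. hs k y - h y) \<in> borel_measurable (mu c0 Q)" for k using hs_meas h by measurable
  note gdiff = bounded_mult_square_integral_le[OF diff_meas hs(2) g_meas G(2),
      unfolded space_mu[OF st], folded D_def]
  have gh_sq: "integrable (mu c0 Q) (\<lambda>y. (g y * h y)^2)"
    using integrable_square_diff[OF _ _ ghs_sq[of 0] gdiff(1)[of 0]] g_meas hs_meas h
    by (simp add: right_diff_distrib)
  define vol where "vol = measure lborel (cube (real n) :: (real ^ 'd) set)"
  have "0 \<le> D k" "0 \<le> vol" for k by (simp_all add: D_def vol_def)
  have cube: "cube (real n) \<in> sets lborel" "emeasure lborel (cube (real n) :: (real ^ 'd) set) < \<infinity>"
    by (simp, rule emeasure_bounded_finite[OF bounded_cube])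
  have "((\<lambda>\<epsilon>. \<integral>z. v\<epsilon> \<epsilon> z * \<phi> z * (g (tau_r ((1 / \<epsilon>) *\<^sub>R z) \<omega>) * h (tau_r ((1 / \<epsilon>) *\<^sub>R z) \<omega>))
      \<partial>mu_eps \<omega> \<epsilon>) \<longlongrightarrow> (\<integral>x. (\<integral>y. v (x, y) * \<phi> x * (g y * h y) \<partial>mu c0 Q) \<partial>lborel)) (at_right 0)"
  txt \<open>The slack \<open>1 / Suc k\<close> in \<open>\<beta>\<close> turns the ergodic limit into an eventual bound.\<close>
  proof (rule two_scale_tensor_test_by_approximation[OF st ts \<phi>_meas \<phi>_bound \<phi>_meas \<phi>_bound,
        where us = "\<lambda>k y. g y * hs k y"
        and \<beta> = "\<lambda>k. \<Phi> * G * sqrt ((2 * real n) ^ CARD('d) * D k + 1 / Suc k)"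
        and \<gamma> = "\<lambda>k. \<Phi> * G * sqrt (vol * D k)"])
    fix k
    show "((\<lambda>\<epsilon>. \<integral>z. v\<epsilon> \<epsilon> z * \<phi> z * (g (tau_r ((1 / \<epsilon>) *\<^sub>R z) \<omega>) * hs k (tau_r ((1 / \<epsilon>) *\<^sub>R z) \<omega>))
        \<partial>mu_eps \<omega> \<epsilon>) \<longlongrightarrow> (\<integral>x. (\<integral>y. v (x, y) * \<phi> x * (g y * hs k y) \<partial>mu c0 Q) \<partial>lborel)) (at_right 0)"
      by (rule two_scale_weak_Cc_test[OF st \<omega> ts \<phi> continuous_on_mult[OF g hs(1)]])
    show "\<forall>\<^sub>F \<epsilon> in at_right 0. (\<integral>z. (\<phi> z * (g (tau_r ((1 / \<epsilon>) *\<^sub>R z) \<omega>) * h (tau_r ((1 / \<epsilon>) *\<^sub>R z) \<omega>))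
        - \<phi> z * (g (tau_r ((1 / \<epsilon>) *\<^sub>R z) \<omega>) * hs k (tau_r ((1 / \<epsilon>) *\<^sub>R z) \<omega>)))^2 \<partial>mu_eps \<omega> \<epsilon>)
        \<le> (\<Phi> * G * sqrt ((2 * real n) ^ CARD('d) * D k + 1 / Suc k))^2"
      using eventually_weighted_square_mu_eps_le[OF \<omega>_Omega \<phi>_bound G(2) ergodic[where k=k and n=n],
          where X = "(2 * real n) ^ CARD('d) * D k + 1 / real (Suc k)"] \<open>0 \<le> D k\<close>
      by (simp add: D_def power_mult_distrib)
    have "(\<phi> (fst p) * (g (snd p) * h (snd p)) - \<phi> (fst p) * (g (snd p) * hs k (snd p)))^2
        = (\<phi> (fst p) * (g (snd p) * (hs k (snd p) - h (snd p))))^2" for p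
      by (simp add: power2_commute right_diff_distrib)
    moreover have "(\<integral>p. (\<phi> (fst p) * (g (snd p) * (hs k (snd p) - h (snd p))))^2 \<partial>(lborel \<Otimes>\<^sub>M mu c0 Q))
        \<le> \<Phi>^2 * vol * (\<integral>y. (g y * (hs k y - h y))^2 \<partial>mu c0 Q)"
      unfolding vol_def using g_meas diff_meas[of k]
      by (intro square_integrable_tensor(2)[OF sigma_finite_lborel mu.sigma_finite_measure_axioms
            cube \<phi>_meas \<phi>_bound _ gdiff(1)]) simp
    moreover have "\<Phi>^2 * vol * (\<integral>y. (g y * (hs k y - h y))^2 \<partial>mu c0 Q) \<le> (\<Phi> * G * sqrt (vol * D k))^2"
      using mult_left_mono[OF gdiff(2)[of k], of "\<Phi>^2 * vol"] \<open>0 \<le> vol\<close> \<open>0 \<le> D k\<close>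
      by (simp add: power_mult_distrib mult_ac)
    ultimately show "(\<integral>p. (\<phi> (fst p) * (g (snd p) * h (snd p)) - \<phi> (fst p) * (g (snd p) * hs k (snd p)))^2
        \<partial>(lborel \<Otimes>\<^sub>M mu c0 Q)) \<le> (\<Phi> * G * sqrt (vol * D k))^2"
      by simp
    show "0 \<le> \<Phi> * G * sqrt ((2 * real n) ^ CARD('d) * D k + 1 / Suc k)" "0 \<le> \<Phi> * G * sqrt (vol * D k)"
      using \<Phi> G(1) \<open>0 \<le> D k\<close> \<open>0 \<le> vol\<close> by simp_all
  next
    have inv: "(\<lambda>k. 1 / real (Suc k)) \<longlonglongrightarrow> 0" using LIMSEQ_Suc[OF lim_1_over_n] by simp
    have "D \<longlonglongrightarrow> 0" using hs(3) by (simp add: D_def[abs_def])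
    then have "(\<lambda>k. (2 * real n) ^ CARD('d) * D k + 1 / Suc k) \<longlonglongrightarrow> 0" "(\<lambda>k. vol * D k) \<longlonglongrightarrow> 0"
      using tendsto_add[OF tendsto_mult_right_zero inv] tendsto_mult_right_zero by auto
    from this[THEN tendsto_real_sqrt]
    show "(\<lambda>k. \<Phi> * G * sqrt ((2 * real n) ^ CARD('d) * D k + 1 / Suc k)) \<longlonglongrightarrow> 0"
      "(\<lambda>k. \<Phi> * G * sqrt (vol * D k)) \<longlonglongrightarrow> 0"
      by (auto intro: tendsto_mult_right_zero)
  qed (use g_meas h hs_meas gh_sq ghs_sq in auto)
  then show ?thesis unfolding mult.assoc .
qed

theorem mainTheorem10:
  fixes c0 :: real and Q :: "('d::finite) env measure"
    and \<psi> :: "nat \<Rightarrow> 'd env \<times> (int ^ 'd) \<Rightarrow> real"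
    and f :: "nat \<Rightarrow> int ^ 'd \<Rightarrow> nat \<Rightarrow> 'd env \<Rightarrow> real"
    and \<omega> :: "'d env"
    and v\<epsilon> :: "real \<Rightarrow> real ^ 'd \<Rightarrow> real" and v :: "(real ^ 'd) \<times> 'd env \<Rightarrow> real"
    and j :: nat and e :: "int ^ 'd"
    and g :: "'d env \<Rightarrow> real" and \<phi> :: "real ^ 'd \<Rightarrow> real"
  assumes "standing c0 Q"
    and "regular_data c0 Q \<psi> f"
    and "\<omega> \<in> Omega_star c0 Q \<psi> f"
    and "two_scale_weak c0 Q \<omega> v\<epsilon> v"
    and "e \<in> Bset"
    and "continuous_on (Omega c0) g"
    and "Cc \<phi>"
  shows "((\<lambda>\<epsilon>. \<integral>x. v\<epsilon> \<epsilon> x * \<phi> x * g (tau_r ((1 / \<epsilon>) *\<^sub>R x) \<omega>) * Psi \<psi> j e (tau_r ((1 / \<epsilon>) *\<^sub>R x) \<omega>) \<partial>mu_eps \<omega> \<epsilon>)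
          \<longlongrightarrow> (\<integral>x. (\<integral>\<omega>'. v (x, \<omega>') * \<phi> x * g \<omega>' * Psi \<psi> j e \<omega>' \<partial>mu c0 Q) \<partial>lborel)) (at_right 0)"
proof -
  have \<omega>1: "\<omega> \<in> Omega1 c0 Q" and \<omega>j: "\<omega> \<in> Omega_star_j c0 Q \<psi> f j"
    using assms(3) by (auto simp: Omega_star_def)
  have approx: "\<And>k. continuous_on (Omega c0) (f j e k)"
      "\<And>k. integrable (mu c0 Q) (\<lambda>\<omega>'. (f j e k \<omega>' - Psi \<psi> j e \<omega>')^2)"
      "(\<lambda>k. \<integral>\<omega>'. (f j e k \<omega>' - Psi \<psi> j e \<omega>')^2 \<partial>mu c0 Q) \<longlonglongrightarrow> 0"
    using assms(2,5) by (auto simp: regular_data_def)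
  show ?thesis
    by (rule two_scale_weak_L2_weight[OF assms(1) \<omega>1 assms(4,7,6)
          borel_measurable_mu_Psi[OF assms(1,2,5)] approx])
      (use \<omega>j assms(5) in \<open>auto simp: Omega_star_j_def\<close>)
qed

end
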